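(* Let $K$ be a compact subset of $I\cap\{(c,\gamma):c_1=-1,\ \gamma<\gamma^+(c)\}$. Then for any $\epsilon>0$ there exist positive constants $\delta$ and $C$, depending only on $\epsilon$ and $K$, such that for all $(c,\gamma)\in K$, $$\left|U^{c,\gamma}_\theta(x)-2-\frac{4}{\ln\frac{1+x}{3}}\right|<C\left|\ln\frac{1+x}{3}\right|^{-2+\epsilon},\quad -1<x<-1+\delta.$$
   Context: For $c=(c_1,c_2,c_3)$ let $P_c(x):=c_1(1-x)+c_2(1+x)+c_3(1-x^2)$ and consider $(1-x^2)U'+2xU+\frac12U^2=P_c(x)$ on $(-1,1)$. For $c_1,c_2\ge-1$ let $\bar c_3(c_1,c_2):=-\frac12(\sqrt{1+c_1}+\sqrt{1+c_2})(\sqrt{1+c_1}+\sqrt{1+c_2}+2)$, $J:=\{c:c_1\ge-1,c_2\ge-1,c_3\ge\bar c_3\}$. For $c\in J$ there are solutions $U^\pm_\theta(c)$ on $(-1,1)$ with $U^-_\theta(c)\le U\le U^+_\theta(c)$ for every solution $U$; $\gamma^\pm(c):=U^\pm_\theta(c)(0)$; $I:=\{(c,\gamma):c\in J,\gamma^-(c)\le\gamma\le\gamma^+(c)\}$; for $(c,\gamma)\in I$, $U^{c,\gamma}_\theta$ is the unique solution on $(-1,1)$ with $U^{c,\gamma}_\theta(0)=\gamma$. *)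

theory Defs
  imports "HOL-Analysis.Analysis"
begin

type_synonym param = "real \<times> real \<times> real"

definition c1 :: "param \<Rightarrow> real" where "c1 c = fst c"
definition c2 :: "param \<Rightarrow> real" where "c2 c = fst (snd c)"
definition c3 :: "param \<Rightarrow> real" where "c3 c = snd (snd c)"

definition Pc :: "param \<Rightarrow> real \<Rightarrow> real" where
  "Pc c x = c1 c * (1 - x) + c2 c * (1 + x) + c3 c * (1 - x^2)"

definition is_sol :: "param \<Rightarrow> (real \<Rightarrow> real) \<Rightarrow> bool" where
  "is_sol c U \<longleftrightarrow> (\<forall>x\<in>{-1<..<1}. \<exists>d. (U has_real_derivative d) (at x) \<and>
      (1 - x^2) * d + 2 * x * U x + (1/2) * (U x)^2 = Pc c x)"

definition c3bar :: "real \<Rightarrow> real \<Rightarrow> real" where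
  "c3bar a b = - (1/2) * (sqrt (1 + a) + sqrt (1 + b)) * (sqrt (1 + a) + sqrt (1 + b) + 2)"

definition J :: "param set" where
  "J = {c. c1 c \<ge> -1 \<and> c2 c \<ge> -1 \<and> c3 c \<ge> c3bar (c1 c) (c2 c)}"

definition is_max_sol :: "param \<Rightarrow> (real \<Rightarrow> real) \<Rightarrow> bool" where
  "is_max_sol c U \<longleftrightarrow> is_sol c U \<and> (\<forall>V. is_sol c V \<longrightarrow> (\<forall>x\<in>{-1<..<1}. V x \<le> U x))"

definition is_min_sol :: "param \<Rightarrow> (real \<Rightarrow> real) \<Rightarrow> bool" where
  "is_min_sol c U \<longleftrightarrow> is_sol c U \<and> (\<forall>V. is_sol c V \<longrightarrow> (\<forall>x\<in>{-1<..<1}. U x \<le> V x))"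

definition gamma_plus :: "param \<Rightarrow> real" where
  "gamma_plus c = (THE g. \<exists>U. is_max_sol c U \<and> U 0 = g)"

definition gamma_minus :: "param \<Rightarrow> real" where
  "gamma_minus c = (THE g. \<exists>U. is_min_sol c U \<and> U 0 = g)"

definition Iset :: "(param \<times> real) set" where
  "Iset = {(c, g). c \<in> J \<and> gamma_minus c \<le> g \<and> g \<le> gamma_plus c}"

end

theory Submission
  imports Defs
begin

(* Put U(x) = 2 + V(1 + x). For c1 = -1 the equation becomes t(2 - t) V' = t(b - k t) - 2 t V - V^2/2
   on (0, 2), with b = c2 + 2 c3 - 3 and k = c3. A solution either enters the region V(t) < -M t,
   which it cannot leave as t decreases; there 1/V = (ln t)/4 + O(1), and inverting gives
   U = 2 + 4/ln((1 + x)/3) + O(ln((1 + x)/3)^-2). Or it stays above the barrier -M t near 0; then the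
   gap to any larger solution would have to blow up, so it is the maximal solution U^+. Since
   gamma < gamma^+(c) on K, the first alternative holds, and because solutions depend continuously on
   (c, gamma), a compactness argument makes the entry time, hence every constant, uniform on K. *)

section \<open>The equation in solved form\<close>

definition riccati_rhs :: "(real \<Rightarrow> real) \<Rightarrow> real \<Rightarrow> real \<Rightarrow> real" where
  "riccati_rhs P x u = (P x - 2*x*u - u^2/2) / (1 - x^2)"

definition riccati_sol :: "(real \<Rightarrow> real) \<Rightarrow> (real \<Rightarrow> real) \<Rightarrow> bool" where
  "riccati_sol P U \<longleftrightarrow> (\<forall>x\<in>{-1<..<1}. (U has_real_derivative riccati_rhs P x (U x)) (at x))"

lemma is_sol_iff_riccati_sol: "is_sol c U \<longleftrightarrow> riccati_sol (Pc c) U"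
proof -
  have "(1 - x^2) * d + 2 * x * U x + (1/2) * (U x)^2 = Pc c x \<longleftrightarrow> d = riccati_rhs (Pc c) x (U x)"
    if "x \<in> {-1<..<1}" for x d
  proof -
    have "1 - x^2 \<noteq> 0" using that by (auto simp: power2_eq_1_iff)
    then show ?thesis unfolding riccati_rhs_def by (auto simp: field_simps)
  qed
  then show ?thesis unfolding is_sol_def riccati_sol_def by auto
qed

lemma riccati_sol_continuous_on: "riccati_sol P U \<Longrightarrow> S \<subseteq> {-1<..<1} \<Longrightarrow> continuous_on S U"
  unfolding riccati_sol_def
  by (meson DERIV_isCont continuous_at_imp_continuous_on subsetD)

lemma riccati_sol_reflect:
  assumes "riccati_sol P U"
  shows "riccati_sol (\<lambda>y. P (-y)) (\<lambda>y. - U (-y))"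
  unfolding riccati_sol_def
proof
  fix y :: real assume y: "y \<in> {-1<..<1}"
  have "(U has_real_derivative riccati_rhs P (-y) (U (-y))) (at (-y))"
    using assms y unfolding riccati_sol_def by auto
  then have "((\<lambda>x. - U (-x)) has_real_derivative riccati_rhs P (-y) (U (-y))) (at y)"
    using DERIV_mirror DERIV_minus by fastforce
  then show "((\<lambda>y. - U (-y)) has_real_derivative riccati_rhs (\<lambda>y. P (-y)) y ((\<lambda>y. - U (-y)) y)) (at y)"
    unfolding riccati_rhs_def by simp
qed

lemma riccati_rhs_le_neg_square:
  assumes x: "-1 < x" "x < 1" and P: "\<bar>P x\<bar> \<le> Q" and u: "u \<ge> 8 + Q" and Q: "Q \<ge> 0"
  shows "riccati_rhs P x u \<le> -(u^2/4)"
proof -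
  have d: "0 < 1 - x^2" "1 - x^2 \<le> 1" using x by (auto simp: abs_square_less_1)
  have "u*(8+Q) \<le> u*u" "8*Q \<le> u*Q" "(-x)*u \<le> 1*u"
    using u Q x by (intro mult_left_mono mult_right_mono; simp)+
  then have N: "P x - 2*x*u - u^2/2 \<le> -(u^2/4)"
    using P Q by (simp add: power2_eq_square algebra_simps)
  have "riccati_rhs P x u \<le> -(u^2/4) / (1-x^2)"
    unfolding riccati_rhs_def using N d by (intro divide_right_mono) auto
  also have "\<dots> \<le> -(u^2/4)"
  proof -
    have "(u^2/4) * (1 - x^2) \<le> u^2/4" using d by (simp add: mult_left_le)
    then have "u^2/4 \<le> (u^2/4)/(1-x^2)" using d(1) by (subst pos_le_divide_eq) simp_all
    then show ?thesis by simp
  qed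
  finally show ?thesis .
qed

section \<open>A priori bounds\<close>

lemma riccati_sol_ge_left_of_large_value:
  assumes sol: "riccati_sol P U" and Pb: "\<And>x. x \<in> {-1<..<1} \<Longrightarrow> \<bar>P x\<bar> \<le> Q" and Q: "Q \<ge> 0"
    and x0: "x0 < 1" "U x0 > 8 + Q" and y: "-1 < y" "y \<le> x0"
  shows "U x0 \<le> U y"
proof (rule ccontr)
  assume "\<not> U x0 \<le> U y"
  define u1 where "u1 = max (U y) (8+Q)"
  have u1: "u1 < U x0" "u1 \<ge> 8+Q" unfolding u1_def using \<open>\<not> U x0 \<le> U y\<close> x0 by auto
  define A where "A = {z \<in> {y..x0}. U z \<le> u1}"
  have "continuous_on {y..x0} U" using y x0 by (intro riccati_sol_continuous_on[OF sol]) auto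
  then have "closed A" unfolding A_def by (rule continuous_on_closed_Collect_le) (auto intro: continuous_intros)
  moreover have "bounded A" unfolding A_def by (rule bounded_subset[of "{y..x0}"]) auto
  ultimately have cA: "compact A" by (simp add: compact_eq_bounded_closed)
  have "y \<in> A" unfolding A_def u1_def using y by auto
  then obtain z where zA: "z \<in> A" and zmax: "\<And>w. w \<in> A \<Longrightarrow> w \<le> z"
    using compact_attains_sup[OF cA] by blast
  have z: "y \<le> z" "z \<le> x0" "U z \<le> u1" using zA unfolding A_def by auto
  then have "z < x0" using u1 by (metis order.not_eq_order_implies_strict order.strict_iff_not)
  moreover have "(U has_real_derivative riccati_rhs P x (U x)) (at x)" if "z \<le> x" "x \<le> x0" for x
    using sol that y z x0 unfolding riccati_sol_def by auto
  ultimately obtain \<xi> where xi: "z < \<xi>" "\<xi> < x0" "U x0 - U z = (x0 - z) * riccati_rhs P \<xi> (U \<xi>)"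
    using MVT2[of z x0 U "\<lambda>x. riccati_rhs P x (U x)"] by blast
  have "\<xi> \<notin> A" using zmax[of \<xi>] xi by force
  then have "U \<xi> > u1" unfolding A_def using xi z by auto
  moreover have "-1 < \<xi>" "\<xi> < 1" using xi y z x0 by auto
  ultimately have "riccati_rhs P \<xi> (U \<xi>) \<le> -((U \<xi>)^2/4)"
    using riccati_rhs_le_neg_square[of \<xi> P Q "U \<xi>"] Pb[of \<xi>] u1 Q by simp
  moreover have "(U \<xi>)^2/4 > 0" using \<open>U \<xi> > u1\<close> u1 Q by auto
  ultimately have "riccati_rhs P \<xi> (U \<xi>) < 0" by linarith
  then have "(x0 - z) * riccati_rhs P \<xi> (U \<xi>) < 0" using \<open>z < x0\<close> by (simp add: mult_pos_neg)
  then show False using xi z u1 by simp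
qed

text \<open>Above level \<open>8 + Q\<close> we have \<open>U' \<le> -U\<^sup>2/4\<close>, so \<open>1/U - x/4\<close> increases; a large value
  at \<open>x\<^sub>0\<close> would force \<open>1/U\<close> to become negative before \<open>-1\<close> is reached.\<close>

lemma riccati_sol_upper_bound:
  assumes sol: "riccati_sol P U" and Pb: "\<And>x. x \<in> {-1<..<1} \<Longrightarrow> \<bar>P x\<bar> \<le> Q" and Q: "Q \<ge> 0"
    and x0: "-1 < x0" "x0 < 1"
  shows "U x0 \<le> max (8+Q) (4/(1+x0))"
proof (rule ccontr)
  define u0 where "u0 = U x0"
  assume "\<not> U x0 \<le> max (8+Q) (4/(1+x0))"
  then have u0: "u0 > 8+Q" "u0 > 4/(1+x0)" unfolding u0_def by auto
  have u0p: "u0 > 0" using u0 Q by simp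
  have left: "U y \<ge> u0" if "-1 < y" "y \<le> x0" for y
    using riccati_sol_ge_left_of_large_value[OF sol Pb Q x0(2) _ that] u0(1) unfolding u0_def by blast
  define y0 where "y0 = (x0 - 4/u0 - 1)/2"
  have "4/u0 < 1 + x0" using u0 x0 u0p by (simp add: field_simps)
  then have y0: "-1 < y0" "y0 < x0 - 4/u0" unfolding y0_def by auto
  have "4/u0 > 0" using u0p by simp
  then have y0x: "y0 \<le> x0" using y0 by linarith
  have "inverse (U y0) - y0/4 \<le> inverse (U x0) - x0/4"
  proof (rule DERIV_nonneg_imp_nondecreasing[OF y0x])
    fix x assume x: "y0 \<le> x" "x \<le> x0"
    have x1: "-1 < x" "x < 1" using x y0 x0 by auto
    have Ux: "U x \<ge> u0" using left[of x] x1 x by auto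
    have Uxp: "U x > 0" using Ux u0p by linarith
    have dU: "(U has_real_derivative riccati_rhs P x (U x)) (at x)"
      using sol x1 unfolding riccati_sol_def by auto
    have d: "((\<lambda>x. inverse (U x) - x/4) has_real_derivative
        -(riccati_rhs P x (U x) * inverse ((U x)^Suc (Suc 0))) - 1/4) (at x)"
      using DERIV_diff[OF DERIV_inverse_fun[OF dU] DERIV_cdivide[OF DERIV_ident, of 4]] Uxp by simp
    have "riccati_rhs P x (U x) \<le> -((U x)^2/4)"
      using riccati_rhs_le_neg_square[OF x1 Pb _ Q] Ux u0 x1 by simp
    then have "-(riccati_rhs P x (U x)) * inverse ((U x)^2) \<ge> ((U x)^2/4) * inverse ((U x)^2)"
      by (intro mult_right_mono) auto
    moreover have "((U x)^2/4) * inverse ((U x)^2) = 1/4" using Uxp by simp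
    ultimately have "0 \<le> -(riccati_rhs P x (U x) * inverse ((U x)^Suc (Suc 0))) - 1/4"
      by (simp add: numeral_2_eq_2)
    then show "\<exists>y. ((\<lambda>x. inverse (U x) - x/4) has_real_derivative y) (at x) \<and> 0 \<le> y" using d by blast
  qed
  moreover have "(x0 - y0)/4 > inverse u0" using y0 u0p by (simp add: field_simps)
  moreover have "inverse (U y0) > 0" using left[of y0] y0 y0x u0p by simp
  ultimately show False unfolding u0_def by (simp add: diff_divide_distrib)
qed

lemma riccati_sol_abs_bound:
  assumes sol: "riccati_sol P U" and Pb: "\<And>x. x \<in> {-1<..<1} \<Longrightarrow> \<bar>P x\<bar> \<le> Q" and Q: "Q \<ge> 0"
    and x: "\<bar>x\<bar> \<le> \<rho>" and \<rho>: "\<rho> < 1"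
  shows "\<bar>U x\<bar> \<le> max (8+Q) (4/(1-\<rho>))"
proof -
  have x1: "-1 < x" "x < 1" using x \<rho> by auto
  have "4/(1+x) \<le> 4/(1-\<rho>)" "4/(1+(-x)) \<le> 4/(1-\<rho>)" using x \<rho> by (auto intro: divide_left_mono)
  moreover have "U x \<le> max (8+Q) (4/(1+x))" by (rule riccati_sol_upper_bound[OF sol Pb Q x1])
  moreover have "(\<lambda>y. - U (-y)) (-x) \<le> max (8+Q) (4/(1+(-x)))"
    using Pb x1 by (intro riccati_sol_upper_bound[OF riccati_sol_reflect[OF sol] _ Q]) auto
  ultimately show ?thesis unfolding abs_le_iff max_def by (smt (verit))
qed

section \<open>Continuous dependence on the data\<close>

lemma gronwall_forward:
  fixes \<Phi> \<Phi>' :: "real \<Rightarrow> real"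
  assumes x: "0 \<le> x"
    and d: "\<And>y. 0 \<le> y \<Longrightarrow> y \<le> x \<Longrightarrow> (\<Phi> has_real_derivative \<Phi>' y) (at y)"
    and le: "\<And>y. 0 \<le> y \<Longrightarrow> y \<le> x \<Longrightarrow> \<Phi>' y \<le> K * \<Phi> y"
  shows "\<Phi> x \<le> \<Phi> 0 * exp (K * x)"
proof -
  have "\<Phi> x * exp (-K*x) \<le> \<Phi> 0 * exp (-K*0)"
  proof (rule DERIV_nonpos_imp_nonincreasing[OF x])
    fix y assume y: "0 \<le> y" "y \<le> x"
    have "((\<lambda>y. \<Phi> y * exp (-K*y)) has_real_derivative \<Phi>' y * exp (-K*y) + \<Phi> y * (exp (-K*y) * (-K))) (at y)"
      by (rule derivative_eq_intros d[OF y] refl)+ simp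
    moreover have "\<Phi>' y * exp (-K*y) + \<Phi> y * (exp (-K*y) * (-K)) = exp (-K*y) * (\<Phi>' y - K * \<Phi> y)"
      by (simp add: algebra_simps)
    moreover have "exp (-K*y) * (\<Phi>' y - K * \<Phi> y) \<le> 0"
      using le[OF y] by (intro mult_nonneg_nonpos) auto
    ultimately show "\<exists>d. ((\<lambda>y. \<Phi> y * exp (-K*y)) has_real_derivative d) (at y) \<and> d \<le> 0" by auto
  qed
  then show ?thesis by (simp add: exp_minus field_simps)
qed

lemma gronwall_two_sided:
  fixes \<Phi> \<Phi>' :: "real \<Rightarrow> real"
  assumes x: "\<bar>x\<bar> \<le> \<rho>"
    and d: "\<And>y. \<bar>y\<bar> \<le> \<rho> \<Longrightarrow> (\<Phi> has_real_derivative \<Phi>' y) (at y)"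
    and le: "\<And>y. \<bar>y\<bar> \<le> \<rho> \<Longrightarrow> \<bar>\<Phi>' y\<bar> \<le> K * \<Phi> y"
  shows "\<Phi> x \<le> \<Phi> 0 * exp (K * \<bar>x\<bar>)"
proof (cases "0 \<le> x")
  case True
  show ?thesis
    using gronwall_forward[of x \<Phi> \<Phi>' K] True x d le by (simp add: abs_le_iff)
next
  case False
  have "(\<lambda>y. \<Phi> (-y)) (-x) \<le> (\<lambda>y. \<Phi> (-y)) 0 * exp (K * (-x))"
  proof (rule gronwall_forward[where \<Phi>'="\<lambda>y. - \<Phi>' (-y)"])
    fix y assume y: "0 \<le> y" "y \<le> -x"
    then have y': "\<bar>-y\<bar> \<le> \<rho>" using x by auto
    show "((\<lambda>y. \<Phi> (-y)) has_real_derivative - \<Phi>' (-y)) (at y)"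
      using DERIV_mirror[of \<Phi> "\<Phi>' (-y)" y] d[OF y'] by simp
    show "- \<Phi>' (-y) \<le> K * \<Phi> (-y)" using le[OF y'] by (simp add: abs_le_iff)
  qed (use False in simp)
  then show ?thesis using False by simp
qed

lemma abs_diff_le_of_deriv_bound:
  fixes f g f' g' :: "real \<Rightarrow> real"
  assumes ab: "a \<le> b"
    and f: "\<And>x. a \<le> x \<Longrightarrow> x \<le> b \<Longrightarrow> (f has_real_derivative f' x) (at x)"
    and g: "\<And>x. a \<le> x \<Longrightarrow> x \<le> b \<Longrightarrow> (g has_real_derivative g' x) (at x)"
    and le: "\<And>x. a \<le> x \<Longrightarrow> x \<le> b \<Longrightarrow> \<bar>f' x\<bar> \<le> g' x"
  shows "\<bar>f b - f a\<bar> \<le> g b - g a"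
proof -
  have "g a + f a \<le> g b + f b"
    by (rule DERIV_nonneg_imp_nondecreasing[OF ab])
      (use f g le in \<open>force intro: DERIV_add simp: abs_le_iff\<close>)
  moreover have "g a - f a \<le> g b - f b"
    by (rule DERIV_nonneg_imp_nondecreasing[OF ab])
      (use f g le in \<open>force intro: DERIV_diff simp: abs_le_iff\<close>)
  ultimately show ?thesis by linarith
qed

lemma riccati_rhs_diff_bound:
  assumes y: "\<bar>y\<bar> \<le> \<rho>" and \<rho>: "\<rho> < 1" and u: "\<bar>u1\<bar> \<le> R" "\<bar>u2\<bar> \<le> R"
    and P: "\<bar>P1 y - P2 y\<bar> \<le> \<eta>"
  shows "\<bar>riccati_rhs P1 y u1 - riccati_rhs P2 y u2\<bar> \<le> (\<eta> + (2+R)*\<bar>u1 - u2\<bar>)/(1-\<rho>^2)"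
proof -
  have "y^2 \<le> \<rho>^2" using y by (metis abs_le_square_iff abs_of_nonneg abs_ge_zero order_trans)
  moreover have "\<rho>^2 < 1" using y \<rho> by (simp add: abs_square_less_1)
  ultimately have d: "1 - y^2 \<ge> 1 - \<rho>^2" "1 - \<rho>^2 > 0" by auto
  have eq: "riccati_rhs P1 y u1 - riccati_rhs P2 y u2
      = ((P1 y - P2 y) - 2*y*(u1-u2) - (u1-u2)*((u1+u2)/2))/(1-y^2)"
    unfolding riccati_rhs_def by (simp add: diff_divide_distrib[symmetric] field_simps power2_eq_square)
  have "\<bar>2*y*(u1-u2)\<bar> \<le> 2*\<bar>u1-u2\<bar>"
    using y \<rho> by (simp add: abs_mult mult_left_le_one_le)
  moreover have "\<bar>(u1-u2)*((u1+u2)/2)\<bar> \<le> R*\<bar>u1-u2\<bar>"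
  proof -
    have "\<bar>(u1+u2)/2\<bar> \<le> R" using u by (simp add: abs_le_iff; linarith)
    then have "\<bar>u1-u2\<bar> * \<bar>(u1+u2)/2\<bar> \<le> \<bar>u1-u2\<bar> * R" by (intro mult_left_mono) auto
    then show ?thesis by (simp add: abs_mult mult.commute)
  qed
  moreover have "\<bar>(P1 y - P2 y) - 2*y*(u1-u2) - (u1-u2)*((u1+u2)/2)\<bar>
      \<le> \<bar>P1 y - P2 y\<bar> + \<bar>2*y*(u1-u2)\<bar> + \<bar>(u1-u2)*((u1+u2)/2)\<bar>"
    using abs_triangle_ineq4[of "P1 y - P2 y - 2*y*(u1-u2)" "(u1-u2)*((u1+u2)/2)"]
      abs_triangle_ineq4[of "P1 y - P2 y" "2*y*(u1-u2)"] by linarith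
  ultimately have "\<bar>(P1 y - P2 y) - 2*y*(u1-u2) - (u1-u2)*((u1+u2)/2)\<bar> \<le> \<eta> + (2+R)*\<bar>u1 - u2\<bar>"
    using P by (simp add: algebra_simps)
  then show ?thesis
    unfolding eq abs_divide using d by (intro frac_le) auto
qed

lemma abs_two_mult_le_of_affine_bound:
  fixes w w' m R \<eta> :: real
  assumes m: "m > 0" and R: "R \<ge> 0" and \<eta>: "\<eta> \<ge> 0" and w': "\<bar>w'\<bar> \<le> (\<eta> + (2+R)*\<bar>w\<bar>)/m"
  shows "\<bar>2*w*w'\<bar> \<le> (2*(2+R)/m + 1)*(w^2 + (\<eta>/m)^2)"
proof -
  define a where "a = \<bar>w\<bar>"
  have a: "a \<ge> 0" unfolding a_def by simp
  have "\<bar>2*w*w'\<bar> = 2*a*\<bar>w'\<bar>" unfolding a_def by (simp add: abs_mult)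
  also have "\<dots> \<le> 2*a*((\<eta> + (2+R)*a)/m)" using w' a unfolding a_def by (intro mult_left_mono) auto
  also have "\<dots> = 2*(2+R)/m * a^2 + 2*a*(\<eta>/m)" using m by (simp add: field_simps power2_eq_square)
  also have "\<dots> \<le> 2*(2+R)/m * a^2 + (a^2 + (\<eta>/m)^2)"
    using zero_le_power2[of "a - \<eta>/m"] by (simp add: power2_eq_square algebra_simps)
  also have "\<dots> \<le> (2*(2+R)/m + 1)*(a^2 + (\<eta>/m)^2)"
    using m R by (simp add: algebra_simps)
  finally show ?thesis unfolding a_def by simp
qed

lemma riccati_sol_diff_sq_bound:
  assumes s1: "riccati_sol P1 U1" and s2: "riccati_sol P2 U2"
    and \<rho>: "0 \<le> \<rho>" "\<rho> < 1" and R: "R \<ge> 0" and \<eta>: "\<eta> \<ge> 0"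
    and Ub: "\<And>y. \<bar>y\<bar> \<le> \<rho> \<Longrightarrow> \<bar>U1 y\<bar> \<le> R \<and> \<bar>U2 y\<bar> \<le> R"
    and Pd: "\<And>y. \<bar>y\<bar> \<le> \<rho> \<Longrightarrow> \<bar>P1 y - P2 y\<bar> \<le> \<eta>"
    and x: "\<bar>x\<bar> \<le> \<rho>"
  shows "(U1 x - U2 x)^2 \<le> ((U1 0 - U2 0)^2 + (\<eta>/(1-\<rho>^2))^2) * exp (2*(2+R)/(1-\<rho>^2) + 1)"
proof -
  define m where "m = 1 - \<rho>^2"
  have m: "m > 0" unfolding m_def using \<rho> by (simp add: power_less_one_iff abs_square_less_1)
  define K where "K = 2*(2+R)/m + 1"
  have K: "K \<ge> 0" unfolding K_def using m R by simp
  define \<Phi> where "\<Phi> = (\<lambda>y. (U1 y - U2 y)^2 + (\<eta>/m)^2)"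
  define \<Phi>' where "\<Phi>' = (\<lambda>y. 2 * (U1 y - U2 y) * (riccati_rhs P1 y (U1 y) - riccati_rhs P2 y (U2 y)))"
  have "\<Phi> x \<le> \<Phi> 0 * exp (K * \<bar>x\<bar>)"
  proof (rule gronwall_two_sided[OF x])
    fix y assume y: "\<bar>y\<bar> \<le> \<rho>"
    have "y \<in> {-1<..<1}" using y \<rho> by auto
    then have "(U1 has_real_derivative riccati_rhs P1 y (U1 y)) (at y)"
        "(U2 has_real_derivative riccati_rhs P2 y (U2 y)) (at y)"
      using s1 s2 unfolding riccati_sol_def by auto
    then show "(\<Phi> has_real_derivative \<Phi>' y) (at y)"
      unfolding \<Phi>_def \<Phi>'_def by (auto intro!: derivative_eq_intros)
    have "\<bar>riccati_rhs P1 y (U1 y) - riccati_rhs P2 y (U2 y)\<bar> \<le> (\<eta> + (2+R)*\<bar>U1 y - U2 y\<bar>)/m"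
      unfolding m_def using Ub[OF y] riccati_rhs_diff_bound[where ?P1.0=P1 and ?P2.0=P2, OF y \<rho>(2) _ _ Pd[OF y]] by blast
    from abs_two_mult_le_of_affine_bound[OF m R \<eta> this]
    show "\<bar>\<Phi>' y\<bar> \<le> K * \<Phi> y" unfolding \<Phi>'_def \<Phi>_def K_def by simp
  qed
  also have "\<dots> \<le> \<Phi> 0 * exp K"
  proof -
    have "K * \<bar>x\<bar> \<le> K" using x \<rho> K by (simp add: mult_left_le)
    then show ?thesis unfolding \<Phi>_def by (intro mult_left_mono) auto
  qed
  finally have "(U1 x - U2 x)^2 + (\<eta>/m)^2 \<le> \<Phi> 0 * exp K" unfolding \<Phi>_def .
  then show ?thesis unfolding \<Phi>_def K_def m_def by (smt (verit) zero_le_power2)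
qed

definition riccati_lipschitz_const :: "real \<Rightarrow> real \<Rightarrow> real" where
  "riccati_lipschitz_const Q \<rho> =
     sqrt ((1 + 1/(1-\<rho>^2)^2) * exp (2*(2 + max (8+Q) (4/(1-\<rho>)))/(1-\<rho>^2) + 1))"

lemma riccati_lipschitz_const_nonneg: "0 \<le> riccati_lipschitz_const Q \<rho>"
  unfolding riccati_lipschitz_const_def by (intro real_sqrt_ge_zero mult_nonneg_nonneg add_nonneg_nonneg) auto

lemma riccati_sol_continuous_dependence:
  assumes s1: "riccati_sol P1 U1" and s2: "riccati_sol P2 U2"
    and P1: "\<And>x. x \<in> {-1<..<1} \<Longrightarrow> \<bar>P1 x\<bar> \<le> Q" and P2: "\<And>x. x \<in> {-1<..<1} \<Longrightarrow> \<bar>P2 x\<bar> \<le> Q"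
    and Q: "Q \<ge> 0" and Pd: "\<And>x. x \<in> {-1<..<1} \<Longrightarrow> \<bar>P1 x - P2 x\<bar> \<le> \<eta>"
    and \<rho>: "0 \<le> \<rho>" "\<rho> < 1" and x: "\<bar>x\<bar> \<le> \<rho>"
  shows "\<bar>U1 x - U2 x\<bar> \<le> riccati_lipschitz_const Q \<rho> * (\<bar>U1 0 - U2 0\<bar> + \<eta>)"
proof -
  define R where "R = max (8+Q) (4/(1-\<rho>))"
  define m where "m = 1 - \<rho>^2"
  define E where "E = exp (2*(2+R)/m + 1)"
  have m: "m > 0" unfolding m_def using \<rho> by (simp add: power_less_one_iff abs_square_less_1)
  have \<eta>: "\<eta> \<ge> 0" using Pd[of 0] by simp
  have "(U1 x - U2 x)^2 \<le> ((U1 0 - U2 0)^2 + (\<eta>/m)^2) * E"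
    unfolding m_def E_def
  proof (rule riccati_sol_diff_sq_bound[OF s1 s2 \<rho> _ \<eta> _ _ x])
    show "R \<ge> 0" unfolding R_def using Q by simp
    show "\<bar>U1 y\<bar> \<le> R \<and> \<bar>U2 y\<bar> \<le> R" if "\<bar>y\<bar> \<le> \<rho>" for y
      unfolding R_def using riccati_sol_abs_bound[OF s1 P1 Q that \<rho>(2)]
        riccati_sol_abs_bound[OF s2 P2 Q that \<rho>(2)] by blast
    show "\<bar>P1 y - P2 y\<bar> \<le> \<eta>" if "\<bar>y\<bar> \<le> \<rho>" for y using Pd[of y] that \<rho> by (simp add: abs_le_iff)
  qed
  also have "\<dots> \<le> ((\<bar>U1 0 - U2 0\<bar> + \<eta>)^2 * (1 + 1/m^2)) * E"
  proof -
    have "\<bar>U1 0 - U2 0\<bar>^2 \<le> (\<bar>U1 0 - U2 0\<bar> + \<eta>)^2" using \<eta> by (intro power_mono) auto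
    moreover have "\<eta>^2 \<le> (\<bar>U1 0 - U2 0\<bar> + \<eta>)^2" using \<eta> by (intro power_mono) auto
    ultimately
    have "(U1 0 - U2 0)^2 + (\<eta>/m)^2 \<le> (\<bar>U1 0 - U2 0\<bar> + \<eta>)^2 * (1 + 1/m^2)"
      using m by (simp add: power_divide divide_right_mono distrib_left add_mono)
    then show ?thesis unfolding E_def by (rule mult_right_mono) simp
  qed
  also have "\<dots> = (riccati_lipschitz_const Q \<rho> * (\<bar>U1 0 - U2 0\<bar> + \<eta>))^2"
    unfolding riccati_lipschitz_const_def E_def R_def m_def
    using m unfolding m_def by (simp add: power_mult_distrib add_pos_nonneg)
  finally have "\<bar>U1 x - U2 x\<bar>^2 \<le> (riccati_lipschitz_const Q \<rho> * (\<bar>U1 0 - U2 0\<bar> + \<eta>))^2"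
    by simp
  then show ?thesis
    by (rule power2_le_imp_le) (use \<eta> riccati_lipschitz_const_nonneg[of Q \<rho>] in simp)
qed

section \<open>Limits of solutions\<close>

lemma convergent_with_rate:
  fixes X \<beta> :: "nat \<Rightarrow> real"
  assumes bd: "\<And>n m. \<bar>X n - X m\<bar> \<le> C*(\<beta> n + \<beta> m)" and \<beta>: "\<beta> \<longlonglongrightarrow> 0"
    and \<beta>pos: "\<And>n. \<beta> n \<ge> 0" and C: "C \<ge> 0"
  shows "X \<longlonglongrightarrow> lim X" "\<And>n. \<bar>X n - lim X\<bar> \<le> C * \<beta> n"
proof -
  have "Cauchy X"
  proof (rule CauchyI)
    fix e :: real assume e: "e > 0"
    then have "e/(2*C+2) > 0" using C by simp
    then obtain M where M: "\<And>n. n \<ge> M \<Longrightarrow> \<beta> n < e/(2*C+2)"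
      using \<beta> unfolding LIMSEQ_iff by (metis \<beta>pos abs_of_nonneg diff_zero real_norm_def)
    have "norm (X m - X n) < e" if "m \<ge> M" "n \<ge> M" for m n
    proof -
      have "C*(\<beta> m + \<beta> n) \<le> C*(2*(e/(2*C+2)))"
        using M[OF that(1)] M[OF that(2)] C by (intro mult_left_mono) auto
      also have "\<dots> < e" using C e by (simp add: field_simps)
      finally show ?thesis using bd[of m n] by simp
    qed
    then show "\<exists>M. \<forall>m\<ge>M. \<forall>n\<ge>M. norm (X m - X n) < e" by blast
  qed
  then show lim: "X \<longlonglongrightarrow> lim X" by (simp add: Cauchy_convergent_iff convergent_LIMSEQ_iff)
  fix n
  have "(\<lambda>m. \<bar>X n - X m\<bar>) \<longlonglongrightarrow> \<bar>X n - lim X\<bar>" by (intro tendsto_intros lim)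
  moreover have "(\<lambda>m. C*(\<beta> n + \<beta> m)) \<longlonglongrightarrow> C*(\<beta> n + 0)" by (intro tendsto_intros \<beta>)
  ultimately show "\<bar>X n - lim X\<bar> \<le> C * \<beta> n" using bd by (intro LIMSEQ_le) auto
qed

lemma DERIV_uniform_limit:
  fixes f f' :: "nat \<Rightarrow> real \<Rightarrow> real"
  assumes S: "open S" "convex S" "x0 \<in> S"
    and f: "\<And>n y. y \<in> S \<Longrightarrow> (f n has_real_derivative f' n y) (at y)"
    and conv: "\<And>y. y \<in> S \<Longrightarrow> (\<lambda>n. f n y) \<longlonglongrightarrow> g y"
    and f': "\<And>n y. y \<in> S \<Longrightarrow> \<bar>f' n y - g' y\<bar> \<le> \<gamma> n" and \<gamma>: "\<gamma> \<longlonglongrightarrow> 0"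
  shows "(g has_real_derivative g' x0) (at x0)"
proof -
  have "\<exists>G. \<forall>y\<in>S. (\<lambda>n. f n y) \<longlonglongrightarrow> G y \<and> (G has_derivative (\<lambda>h. g' y * h)) (at y within S)"
  proof (rule has_derivative_sequence[where f=f and f'="\<lambda>n y h. f' n y * h" and g'="\<lambda>y h. g' y * h",
        OF S(2) _ _ S(3) conv[OF S(3)]])
    show "(f n has_derivative (\<lambda>h. f' n y * h)) (at y within S)" if "y \<in> S" for n y
      using f[OF that] unfolding has_field_derivative_def by (rule has_derivative_at_withinI)
  next
    fix \<epsilon> :: real assume "\<epsilon> > 0"
    with \<gamma> have "\<forall>\<^sub>F n in sequentially. \<gamma> n < \<epsilon>" by (rule order_tendstoD(2))
    then show "\<forall>\<^sub>F n in sequentially. \<forall>y\<in>S. \<forall>h. norm (f' n y * h - g' y * h) \<le> \<epsilon> * norm h"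
    proof (rule eventually_mono, intro ballI allI)
      fix n y h assume "\<gamma> n < \<epsilon>" "y \<in> S"
      then have "\<bar>f' n y - g' y\<bar> \<le> \<epsilon>" using f'[of y n] by simp
      then have "\<bar>f' n y - g' y\<bar> * \<bar>h\<bar> \<le> \<epsilon> * \<bar>h\<bar>" by (rule mult_right_mono) simp
      then show "norm (f' n y * h - g' y * h) \<le> \<epsilon> * norm h" by (simp add: abs_mult left_diff_distrib[symmetric])
    qed
  qed
  then obtain G where G: "\<And>y. y \<in> S \<Longrightarrow> (\<lambda>n. f n y) \<longlonglongrightarrow> G y"
    "\<And>y. y \<in> S \<Longrightarrow> (G has_derivative (\<lambda>h. g' y * h)) (at y within S)" by blast
  have "(G has_real_derivative g' x0) (at x0)"
    using G(2)[OF S(3)] at_within_open[OF S(3,1)] unfolding has_field_derivative_def by simp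
  then show ?thesis
    by (rule has_field_derivative_transform_within_open[OF _ S(1,3)])
      (use G(1) conv LIMSEQ_unique in metis)
qed

lemma riccati_sol_uniform_limit:
  fixes Ps Us :: "nat \<Rightarrow> real \<Rightarrow> real"
  assumes sols: "\<And>n. riccati_sol (Ps n) (Us n)"
    and bd: "\<And>n y \<rho>. \<bar>y\<bar> \<le> \<rho> \<Longrightarrow> \<rho> < 1 \<Longrightarrow> \<bar>Us n y\<bar> \<le> R \<rho> \<and> \<bar>U y\<bar> \<le> R \<rho>"
    and Pconv: "\<And>n x. x \<in> {-1<..<1} \<Longrightarrow> \<bar>Ps n x - P x\<bar> \<le> e n" and e: "e \<longlonglongrightarrow> 0"
    and Uconv: "\<And>n y \<rho>. 0 \<le> \<rho> \<Longrightarrow> \<rho> < 1 \<Longrightarrow> \<bar>y\<bar> \<le> \<rho> \<Longrightarrow> \<bar>Us n y - U y\<bar> \<le> D \<rho> * \<beta> n"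
    and \<beta>: "\<beta> \<longlonglongrightarrow> 0"
  shows "riccati_sol P U"
  unfolding riccati_sol_def
proof
  fix x0 :: real assume x0: "x0 \<in> {-1<..<1}"
  define \<rho> where "\<rho> = (1 + \<bar>x0\<bar>)/2"
  have \<rho>: "0 \<le> \<rho>" "\<rho> < 1" "\<bar>x0\<bar> < \<rho>" unfolding \<rho>_def using x0 by auto
  define S where "S = {-\<rho><..<\<rho>}"
  have S: "open S" "convex S" "x0 \<in> S" unfolding S_def using \<rho> by auto
  have Sy: "\<bar>y\<bar> \<le> \<rho>" "y \<in> {-1<..<1}" if "y \<in> S" for y using that \<rho> unfolding S_def by auto
  have R0: "0 \<le> R \<rho>" using bd[of 0 \<rho> 0] \<rho> by auto
  define \<gamma> where "\<gamma> = (\<lambda>n. (e n + (2 + R \<rho>) * (D \<rho> * \<beta> n)) / (1 - \<rho>^2))"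
  show "(U has_real_derivative riccati_rhs P x0 (U x0)) (at x0)"
  proof (rule DERIV_uniform_limit[OF S, where f'="\<lambda>n y. riccati_rhs (Ps n) y (Us n y)" and \<gamma>=\<gamma>])
    show "(Us n has_real_derivative riccati_rhs (Ps n) y (Us n y)) (at y)" if "y \<in> S" for n y
      using sols[of n] Sy(2)[OF that] unfolding riccati_sol_def by auto
    show "(\<lambda>n. Us n y) \<longlonglongrightarrow> U y" if "y \<in> S" for y
    proof -
      have "(\<lambda>n. Us n y - U y) \<longlonglongrightarrow> 0"
        by (rule Lim_null_comparison[OF _ tendsto_mult_left_zero[OF \<beta>, of "D \<rho>"]], intro always_eventually allI)
          (use Uconv[OF \<rho>(1,2) Sy(1)[OF that]] in \<open>simp add: mult.commute\<close>)
      then show ?thesis by (rule LIM_zero_cancel)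
    qed
    have "\<gamma> \<longlonglongrightarrow> (0 + (2 + R \<rho>) * (D \<rho> * 0)) / (1 - \<rho>^2)"
      unfolding \<gamma>_def using \<rho> by (intro tendsto_intros e \<beta>) (simp add: power2_eq_1_iff)
    then show "\<gamma> \<longlonglongrightarrow> 0" by simp
    fix n y assume y: "y \<in> S"
    have "\<bar>riccati_rhs (Ps n) y (Us n y) - riccati_rhs P y (U y)\<bar>
        \<le> (e n + (2 + R \<rho>)*\<bar>Us n y - U y\<bar>)/(1-\<rho>^2)"
      using bd[OF Sy(1)[OF y] \<rho>(2), of n] Pconv[OF Sy(2)[OF y], of n]
      by (intro riccati_rhs_diff_bound[where ?P1.0="Ps n" and ?P2.0=P, OF Sy(1)[OF y] \<rho>(2)]) auto
    also have "\<dots> \<le> \<gamma> n" unfolding \<gamma>_def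
    proof (rule divide_right_mono)
      show "e n + (2 + R \<rho>) * \<bar>Us n y - U y\<bar> \<le> e n + (2 + R \<rho>) * (D \<rho> * \<beta> n)"
        using Uconv[OF \<rho>(1,2) Sy(1)[OF y], of n] R0 by (simp add: mult_left_mono)
      show "0 \<le> 1 - \<rho>^2" using \<rho> by (simp add: power_le_one)
    qed
    finally show "\<bar>riccati_rhs (Ps n) y (Us n y) - riccati_rhs P y (U y)\<bar> \<le> \<gamma> n" .
  qed
qed

lemma riccati_sol_limit:
  fixes Ps Us :: "nat \<Rightarrow> real \<Rightarrow> real"
  assumes sols: "\<And>n. riccati_sol (Ps n) (Us n)"
    and Pb: "\<And>n x. x \<in> {-1<..<1} \<Longrightarrow> \<bar>Ps n x\<bar> \<le> Q" and Q: "Q \<ge> 0"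
    and Pconv: "\<And>n x. x \<in> {-1<..<1} \<Longrightarrow> \<bar>Ps n x - P x\<bar> \<le> e n" and e: "e \<longlonglongrightarrow> 0"
    and g: "(\<lambda>n. Us n 0) \<longlonglongrightarrow> g"
  shows "\<exists>U. riccati_sol P U \<and> U 0 = g \<and> (\<forall>x\<in>{-1<..<1}. (\<lambda>n. Us n x) \<longlonglongrightarrow> U x)"
proof -
  have e0: "e n \<ge> 0" for n using Pconv[of 0 n] by (smt (verit) greaterThanLessThan_iff)
  define \<beta> where "\<beta> = (\<lambda>n. \<bar>Us n 0 - g\<bar> + e n)"
  have \<beta>pos: "\<beta> n \<ge> 0" for n unfolding \<beta>_def using e0[of n] by simp
  have "\<beta> \<longlonglongrightarrow> \<bar>g - g\<bar> + 0" unfolding \<beta>_def by (intro tendsto_intros g e)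
  then have \<beta>0: "\<beta> \<longlonglongrightarrow> 0" by simp
  define L where "L = riccati_lipschitz_const Q"
  have Cauchy: "\<bar>Us n y - Us m y\<bar> \<le> L \<rho> * (\<beta> n + \<beta> m)"
    if "0 \<le> \<rho>" "\<rho> < 1" "\<bar>y\<bar> \<le> \<rho>" for n m y \<rho>
  proof -
    have "\<bar>Us n y - Us m y\<bar> \<le> L \<rho> * (\<bar>Us n 0 - Us m 0\<bar> + (e n + e m))"
      unfolding L_def
    proof (rule riccati_sol_continuous_dependence[OF sols sols Pb Pb Q _ that])
      fix x :: real assume "x \<in> {-1<..<1}"
      then show "\<bar>Ps n x - Ps m x\<bar> \<le> e n + e m"
        using Pconv[of x n] Pconv[of x m] by (simp add: abs_le_iff; linarith)
    qed
    also have "\<dots> \<le> L \<rho> * (\<beta> n + \<beta> m)"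
      unfolding L_def \<beta>_def using riccati_lipschitz_const_nonneg
      by (intro mult_left_mono) (auto simp: abs_le_iff)
    finally show ?thesis .
  qed
  define U where "U = (\<lambda>x. lim (\<lambda>n. Us n x))"
  have conv: "(\<lambda>n. Us n x) \<longlonglongrightarrow> U x" if "x \<in> {-1<..<1}" for x
    unfolding U_def
  proof (rule convergent_with_rate(1))
    show "\<bar>Us n x - Us m x\<bar> \<le> L \<bar>x\<bar> * (\<beta> n + \<beta> m)" for n m using that by (intro Cauchy) auto
  qed (use \<beta>0 \<beta>pos riccati_lipschitz_const_nonneg in \<open>auto simp: L_def\<close>)
  have "riccati_sol P U"
  proof (rule riccati_sol_uniform_limit[OF sols _ Pconv e _ \<beta>0])
    fix n :: nat and y \<rho> :: real assume y: "\<bar>y\<bar> \<le> \<rho>" "\<rho> < 1"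
    have bd: "\<bar>Us k y\<bar> \<le> max (8+Q) (4/(1-\<rho>))" for k
      by (rule riccati_sol_abs_bound[OF sols Pb Q y])
    moreover have "\<bar>U y\<bar> \<le> max (8+Q) (4/(1-\<rho>))"
    proof (rule LIMSEQ_le_const2)
      show "(\<lambda>n. \<bar>Us n y\<bar>) \<longlonglongrightarrow> \<bar>U y\<bar>" using y by (intro tendsto_intros conv) auto
    qed (use bd in auto)
    ultimately show "\<bar>Us n y\<bar> \<le> max (8+Q) (4/(1-\<rho>)) \<and> \<bar>U y\<bar> \<le> max (8+Q) (4/(1-\<rho>))" by blast
  next
    fix n :: nat and y \<rho> :: real assume "0 \<le> \<rho>" "\<rho> < 1" "\<bar>y\<bar> \<le> \<rho>"
    then show "\<bar>Us n y - U y\<bar> \<le> L \<rho> * \<beta> n"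
      unfolding U_def
      by (intro convergent_with_rate(2)[OF Cauchy \<beta>0 \<beta>pos]) (auto simp: L_def riccati_lipschitz_const_nonneg)
  qed
  moreover have "U 0 = g" unfolding U_def using limI[OF g] .
  ultimately show ?thesis using conv by blast
qed

section \<open>The equation near \<open>x = -1\<close>\<close>

definition shifted_rhs :: "real \<Rightarrow> real \<Rightarrow> real \<Rightarrow> real \<Rightarrow> real" where
  "shifted_rhs b k t w = (t*(b - k*t) - w^2/2 - 2*t*w) / (t*(2-t))"

definition shifted_sol :: "real \<Rightarrow> real \<Rightarrow> (real \<Rightarrow> real) \<Rightarrow> bool" where
  "shifted_sol b k V \<longleftrightarrow> (\<forall>t\<in>{0<..<2}. (V has_real_derivative shifted_rhs b k t (V t)) (at t))"

lemma shifted_sol_of_is_sol: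
  assumes "is_sol c U" "c1 c = -1"
  shows "shifted_sol (c2 c + 2*c3 c - 3) (c3 c) (\<lambda>t. U (t-1) - 2)"
  unfolding shifted_sol_def
proof
  fix t :: real assume t: "t \<in> {0<..<2}"
  have "(U has_real_derivative riccati_rhs (Pc c) (t-1) (U (t-1))) (at (t + -1))"
    using assms(1) t unfolding is_sol_iff_riccati_sol riccati_sol_def by auto
  then have d: "((\<lambda>t. U (t + -1)) has_real_derivative riccati_rhs (Pc c) (t-1) (U (t-1))) (at t)"
    using DERIV_shift by blast
  have "t*(2-t) \<noteq> 0" "1 - (t-1)^2 = t*(2-t)" using t by (auto simp: power2_eq_square algebra_simps)
  then have "riccati_rhs (Pc c) (t-1) (U (t-1)) = shifted_rhs (c2 c + 2*c3 c - 3) (c3 c) t (U (t-1) - 2)"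
    unfolding riccati_rhs_def shifted_rhs_def Pc_def using assms(2)
    by (simp add: field_simps power2_eq_square)
  then show "((\<lambda>t. U (t-1) - 2) has_real_derivative
      shifted_rhs (c2 c + 2*c3 c - 3) (c3 c) t ((\<lambda>t. U (t-1) - 2) t)) (at t)"
    using d by (auto intro!: derivative_eq_intros)
qed

lemma shifted_sol_continuous_on: "shifted_sol b k V \<Longrightarrow> S \<subseteq> {0<..<2} \<Longrightarrow> continuous_on S V"
  unfolding shifted_sol_def by (meson DERIV_isCont continuous_at_imp_continuous_on subsetD)

lemma shifted_rhs_diff:
  assumes "0 < s" "s < 2"
  shows "shifted_rhs b k s v2 - shifted_rhs b k s v = -(v2 - v)*((v + v2)/2 + 2 * s)/(s*(2-s))"
proof -
  have "shifted_rhs b k s v2 - shifted_rhs b k s v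
      = ((s*(b - k * s) - v2^2/2 - 2 * s * v2) - (s*(b - k * s) - v^2/2 - 2 * s * v))/(s*(2-s))"
    unfolding shifted_rhs_def by (simp only: diff_divide_distrib)
  also have "(s*(b - k * s) - v2^2/2 - 2 * s * v2) - (s*(b - k * s) - v^2/2 - 2 * s * v) = -(v2 - v)*((v + v2)/2 + 2 * s)"
    by (simp add: field_simps power2_eq_square)
  finally show ?thesis .
qed

lemma shifted_sol_diff_deriv:
  assumes "shifted_sol b k V" "shifted_sol b k V2" "0 < s" "s < 2"
  shows "((\<lambda>s. V2 s - V s) has_real_derivative -(V2 s - V s)*((V s + V2 s)/2 + 2 * s)/(s*(2-s))) (at s)"
proof -
  have "((\<lambda>s. V2 s - V s) has_real_derivative shifted_rhs b k s (V2 s) - shifted_rhs b k s (V s)) (at s)"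
    using assms unfolding shifted_sol_def by (auto intro!: derivative_eq_intros)
  then show ?thesis using shifted_rhs_diff[OF assms(3,4)] by simp
qed

text \<open>The constants below only depend on a bound \<open>B\<close> for \<open>c\<^sub>2\<close> and \<open>c\<^sub>3\<close>, which is what
  makes all estimates uniform on a compact parameter set.\<close>

lemma shifted_rhs_crosses_barrier:
  assumes B: "0 \<le> B" "\<bar>b\<bar> \<le> 3*B+3" "\<bar>k\<bar> \<le> B"
    and M: "M = 16*B+16" and z: "0 < z" "z * (M^2+M+B+1) \<le> 1"
  shows "shifted_rhs b k z (-M*z) + M > 0"
proof -
  have M1: "M \<ge> 16" using M B by simp
  have "M^2+M+B+1 \<ge> 1" using M1 B by (simp add: add_nonneg_nonneg)
  then have z2: "z \<le> 1" using z by (smt (verit) mult_le_cancel_left1)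
  have eq: "shifted_rhs b k z (-M*z) + M = (b + 2*M + z*(M - M^2/2 - k)) / (2 - z)"
    using z z2 unfolding shifted_rhs_def by (simp add: field_simps power2_eq_square)
  have "\<bar>M - M^2/2 - k\<bar> \<le> M^2+M+B+1"
    using B M1 zero_le_square[of M] unfolding power2_eq_square abs_le_iff by linarith
  then have "z * \<bar>M - M^2/2 - k\<bar> \<le> 1" using z by (smt (verit) mult_left_mono)
  then have "\<bar>z*(M - M^2/2 - k)\<bar> \<le> 1" using z by (simp add: abs_mult)
  then have "z*(M - M^2/2 - k) \<ge> -1" by linarith
  moreover have "b + 2*M \<ge> 2" using B M by linarith
  ultimately show ?thesis unfolding eq using z2 by (intro divide_pos_pos) auto
qed

text \<open>The region \<open>V(t) < -Mt\<close> cannot be left backwards in time: on its boundary \<open>V' > -M\<close>.\<close>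

lemma shifted_sol_below_barrier:
  fixes b k B M t0 t :: real
  assumes sol: "shifted_sol b k V" and B: "0 \<le> B" "\<bar>b\<bar> \<le> 3*B+3" "\<bar>k\<bar> \<le> B"
    and M: "M = 16*B+16" and t0: "0 < t0" "t0 * (M^2+M+B+1) \<le> 1" and v0: "V t0 < -M*t0"
    and t: "0 < t" "t \<le> t0"
  shows "V t < -M*t"
proof (rule ccontr)
  assume "\<not> V t < -M*t"
  define f where "f = (\<lambda>z. V z + M*z)"
  have "M^2+M+B+1 \<ge> 1" using M B by (simp add: add_nonneg_nonneg)
  then have den: "z * (M^2+M+B+1) \<le> 1" if "0 < z" "z \<le> t0" for z
    using that t0 by (smt (verit) mult_right_mono)
  have "t0 < 2" using den[of t0] t0 \<open>M^2+M+B+1 \<ge> 1\<close> by (smt (verit) mult_le_cancel_left1)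
  then have cf: "continuous_on {t..t0} f" unfolding f_def using t
    by (intro continuous_intros shifted_sol_continuous_on[OF sol]) auto
  define A where "A = {z \<in> {t..t0}. 0 \<le> f z}"
  have "closed A" unfolding A_def by (rule continuous_on_closed_Collect_le) (auto intro: continuous_intros cf)
  moreover have "bounded A" unfolding A_def by (rule bounded_subset[of "{t..t0}"]) auto
  ultimately have cA: "compact A" by (simp add: compact_eq_bounded_closed)
  have "t \<in> A" unfolding A_def f_def using \<open>\<not> V t < -M*t\<close> t by auto
  then obtain z where zA: "z \<in> A" and zmax: "\<And>y. y \<in> A \<Longrightarrow> y \<le> z"
    using compact_attains_sup[OF cA] by blast
  have z: "0 < z" "t \<le> z" "z \<le> t0" "0 \<le> f z" using zA t unfolding A_def by auto
  have "f t0 < 0" unfolding f_def using v0 by simp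
  then obtain w where w: "z \<le> w" "w \<le> t0" "f w = 0"
    using IVT2'[of f t0 0 z] z continuous_on_subset[OF cf, of "{z..t0}"] by auto
  then have "w \<in> A" unfolding A_def using z by auto
  then have "w = z" using zmax w by force
  then have "f z = 0" "z < t0" using w \<open>f t0 < 0\<close> by (auto simp: order.order_iff_strict)
  then have Vz: "V z = -M*z" unfolding f_def by simp
  have "(f has_real_derivative shifted_rhs b k z (V z) + M) (at z)"
    using sol z \<open>t0 < 2\<close> unfolding f_def shifted_sol_def by (auto intro!: derivative_eq_intros)
  moreover have "shifted_rhs b k z (V z) + M > 0"
    using shifted_rhs_crosses_barrier[OF B M z(1) den[OF z(1,3)]] Vz by simp
  ultimately obtain d where "d > 0" and d: "\<And>h. h > 0 \<Longrightarrow> h < d \<Longrightarrow> f z < f (z+h)"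
    using DERIV_pos_inc_right by blast
  define h where "h = min (d/2) ((t0-z)/2)"
  have "h \<le> (t0-z)/2" unfolding h_def by (rule min.cobounded2)
  then have h: "0 < h" "h < d" "z + h \<le> t0" unfolding h_def using \<open>d > 0\<close> \<open>z < t0\<close> by auto
  then have "z + h \<in> A" unfolding A_def using d[of h] z w \<open>w = z\<close> by auto
  then show False using zmax[of "z+h"] h by simp
qed

corollary shifted_sol_above_barrier:
  fixes b k B M s t :: real
  assumes sol: "shifted_sol b k V" and B: "0 \<le> B" "\<bar>b\<bar> \<le> 3*B+3" "\<bar>k\<bar> \<le> B"
    and M: "M = 16*B+16" and t: "t * (M^2+M+B+1) \<le> 1" and s: "0 < s" "s \<le> t" and above: "-M * s \<le> V s"
  shows "-M * t \<le> V t"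
  using shifted_sol_below_barrier[OF sol B M _ t _ s] above s by force

section \<open>Logarithmic asymptotics below the barrier\<close>

lemma recip_weight_deriv_nonneg_arith:
  fixes s Z f M \<beta> :: real
  assumes "0 < s" "s \<le> 1" "Z < 0" "s*(-Z)*M \<le> 1" "\<bar>f\<bar> \<le> \<beta>" "4*\<beta> \<le> M" "0 < M"
  shows "-((1/2 + 2 * s * Z - s*f*Z^2)/(2-s)) + (2 - Z)/4 \<ge> 0"
proof -
  define q where "q = -Z"
  have q: "q > 0" using assms q_def by simp
  have sqM: "s*q \<le> 1/M" using assms(4,7) unfolding q_def by (simp add: field_simps)
  have "\<bar>s*f*Z^2\<bar> = \<bar>f\<bar> * (s*q) * q" unfolding q_def using assms(1)
    by (simp add: abs_mult power2_eq_square)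
  also have "\<dots> \<le> \<beta> * (1/M) * q" using assms q sqM
    by (intro mult_right_mono mult_mono) auto
  also have "\<dots> \<le> q/4" using assms q by (simp add: field_simps)
  finally have "-(s*f*Z^2) \<le> q/4" by linarith
  moreover have "2 * s * Z \<le> 0" using assms by (simp add: mult_nonneg_nonpos)
  ultimately have N: "1/2 + 2 * s * Z - s*f*Z^2 \<le> 1/2 + q/4" by linarith
  have "(1/2 + 2 * s * Z - s*f*Z^2)/(2-s) \<le> (2+q)/4"
  proof (cases "1/2 + 2 * s * Z - s*f*Z^2 \<le> 0")
    case True
    then have "(1/2 + 2 * s * Z - s * f * Z^2)/(2-s) \<le> 0" using assms by (simp add: divide_nonpos_pos)
    moreover have "(2+q)/4 > 0" using q by simp
    ultimately show ?thesis by linarith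
  next
    case False
    then have "(1/2 + 2 * s * Z - s*f*Z^2)/(2-s) \<le> 1/2 + 2 * s * Z - s*f*Z^2"
      using assms by (simp add: divide_le_eq)
    moreover have "(2+q)/4 = 1/2 + q/4" by simp
    ultimately show ?thesis using N by linarith
  qed
  then show ?thesis unfolding q_def by simp
qed

lemma log_correction_deriv_arith:
  fixes r q Y f \<beta> s :: real
  assumes "0 < r" "r \<le> 1" "0 \<le> q" "q \<le> Y/r" "\<bar>f\<bar> \<le> \<beta>" "0 \<le> s" "s \<le> 1"
  shows "\<bar>(1/4 + 2*(-q) - f*(-q)^2)/(2-s)\<bar> \<le> (1/4 + 2*Y + \<beta>*Y^2)/r^2"
proof -
  have Y: "0 \<le> Y" using assms by (smt (verit) divide_nonneg_pos mult_nonneg_nonneg pos_le_divide_eq)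
  have r2: "r^2 \<le> r" "0 < r^2" using assms by (auto simp: power2_eq_square mult_le_cancel_left1)
  have "\<bar>f*(-q)^2\<bar> \<le> \<beta>*q^2" using assms by (simp add: abs_mult mult_right_mono)
  then have "\<bar>1/4 + 2*(-q) - f*(-q)^2\<bar> \<le> 1/4 + 2*q + \<beta>*q^2"
    using assms by (simp add: abs_le_iff; linarith)
  also have "\<dots> \<le> (1/4)/r^2 + 2*(Y/r^2) + \<beta>*(Y/r)^2"
  proof -
    have "1/4 \<le> (1/4)/r^2" using r2 assms by (simp add: field_simps)
    moreover have "Y/r \<le> Y/r^2" using r2 Y assms(1) by (intro divide_left_mono) auto
    moreover have "\<beta>*q^2 \<le> \<beta>*(Y/r)^2"
      using assms by (intro mult_left_mono power_mono) auto
    ultimately show ?thesis using assms by linarith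
  qed
  also have "\<dots> = (1/4 + 2*Y + \<beta>*Y^2)/r^2" using r2 by (simp add: field_simps power2_eq_square)
  finally have num: "\<bar>1/4 + 2*(-q) - f*(-q)^2\<bar> \<le> (1/4 + 2*Y + \<beta>*Y^2)/r^2" .
  have "\<bar>(1/4 + 2*(-q) - f*(-q)^2)/(2-s)\<bar> \<le> \<bar>1/4 + 2*(-q) - f*(-q)^2\<bar>"
    using assms by (simp add: abs_divide divide_le_eq mult_le_cancel_left1)
  then show ?thesis using num by linarith
qed

lemma inverse_quarter_log_plus_bounded:
  fixes Z L G Lg l3 el :: real
  assumes "Z = L/4 + G" "\<bar>G\<bar> \<le> Lg" "0 \<le> l3" "l3 \<le> 2" "el = L - l3" "el \<le> -(2*(2+4*Lg)+1)"
  shows "\<bar>1/Z - 4/el\<bar> \<le> 8*(2+4*Lg)/el^2"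
proof -
  define E where "E = 2+4*Lg"
  have Lg: "Lg \<ge> 0" using assms(2) by linarith
  have el5: "el \<le> -5 - 8*Lg" using assms(6) by simp
  then have lneg: "el < 0" using Lg by linarith
  have e1: "\<bar>el - 4*Z\<bar> \<le> E" unfolding E_def using assms(1-5) by (simp add: abs_le_iff; linarith)
  have e2: "\<bar>Z\<bar> \<ge> -el/8" using assms Lg el5 by (simp add: abs_le_iff; linarith)
  have "Z \<noteq> 0" using e2 lneg by auto
  then have eq: "1/Z - 4/el = (el - 4*Z)/(Z*el)" using lneg by (simp add: field_simps)
  have "\<bar>Z\<bar> * (-el) \<ge> (-el/8) * (-el)" using e2 lneg by (intro mult_right_mono) auto
  then have den: "\<bar>Z*el\<bar> \<ge> el^2/8" using lneg by (simp add: abs_mult power2_eq_square abs_of_neg)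
  have "\<bar>1/Z - 4/el\<bar> = \<bar>el - 4*Z\<bar> / \<bar>Z*el\<bar>" unfolding eq by (simp add: abs_divide)
  also have "\<dots> \<le> E / (el^2/8)" using e1 den lneg by (intro frac_le) auto
  finally show ?thesis unfolding E_def by simp
qed

lemma DERIV_sqrt_sqrt:
  assumes "0 < x"
  shows "((\<lambda>s. sqrt (sqrt s)) has_real_derivative 1 / (4 * sqrt (sqrt x) ^ 3)) (at x)"
proof -
  have "((\<lambda>s. sqrt (sqrt s)) has_real_derivative inverse (sqrt (sqrt x)) / 2 * (inverse (sqrt x) / 2)) (at x)"
    using assms by (intro DERIV_chain2[OF DERIV_real_sqrt DERIV_real_sqrt]) auto
  moreover have "sqrt (sqrt x) ^ 3 = sqrt (sqrt x) * sqrt x"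
    using assms by (simp add: power3_eq_cube real_sqrt_mult[symmetric])
  ultimately show ?thesis by (simp add: field_simps)
qed

definition log_correction_const :: "real \<Rightarrow> real \<Rightarrow> real \<Rightarrow> real" where
  "log_correction_const B M t0 =
     1/(M*t0) + \<bar>ln t0\<bar>/4 + 2*(1/4 + 2*(2 + 1/(M*t0)) + (4*B+3)*(2 + 1/(M*t0))^2)"

locale trapped_shifted_sol =
  fixes b k B M t0 :: real and V :: "real \<Rightarrow> real"
  assumes sol: "shifted_sol b k V"
    and B: "0 \<le> B" "\<bar>b\<bar> \<le> 3*B+3" "\<bar>k\<bar> \<le> B"
    and M: "M = 16*B+16" and t0: "0 < t0" "t0 \<le> 1"
    and trapped: "\<And>s. 0 < s \<Longrightarrow> s \<le> t0 \<Longrightarrow> V s < -M * s"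
begin

lemma M_pos: "M > 0"
  using M B by simp

lemma V_neg: "0 < s \<Longrightarrow> s \<le> t0 \<Longrightarrow> V s < 0"
  using trapped[of s] mult_pos_pos[OF M_pos, of s] by linarith

lemma recip_V_barrier:
  assumes "0 < s" "s \<le> t0"
  shows "s * (- (1 / V s)) * M \<le> 1"
proof -
  have "M * s < -V s" "-V s > 0" using trapped[OF assms] V_neg[OF assms] by auto
  then show ?thesis by (simp add: field_simps)
qed

lemma coeff_bound:
  assumes "0 \<le> s" "s \<le> 1"
  shows "\<bar>b - k * s\<bar> \<le> 4*B+3"
proof -
  have "\<bar>k\<bar> * \<bar>s\<bar> \<le> B * 1" using B assms by (intro mult_mono) auto
  then show ?thesis using B abs_triangle_ineq4[of b "k * s"] by (simp add: abs_mult)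
qed

lemma recip_V_has_derivative:
  assumes "0 < s" "s \<le> t0"
  shows "((\<lambda>s. 1 / V s) has_real_derivative
      (1/2 + 2 * s * (1 / V s) - s * (b - k * s) * (1 / V s)^2) / ((2 - s) * s)) (at s)"
proof -
  have "(V has_real_derivative shifted_rhs b k s (V s)) (at s)"
    using sol assms t0 unfolding shifted_sol_def by auto
  then have "((\<lambda>s. 1 / V s) has_real_derivative - shifted_rhs b k s (V s) / (V s)^2) (at s)"
    using V_neg[OF assms] by (auto intro!: derivative_eq_intros simp: power2_eq_square)
  moreover have "- shifted_rhs b k s (V s) / (V s)^2
      = (1/2 + 2 * s * (1 / V s) - s * (b - k * s) * (1 / V s)^2) / ((2 - s) * s)"
    using V_neg[OF assms] assms t0 unfolding shifted_rhs_def by (simp add: field_simps power2_eq_square)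
  ultimately show ?thesis by simp
qed

text \<open>\<open>(2 - 1/V(s)) s\<^bsup>1/4\<^esup>\<close> is nondecreasing, which gives the a priori bound
  \<open>|1/V(s)| = O(s\<^bsup>-1/4\<^esup>)\<close>.\<close>

lemma recip_V_fourth_root_bound:
  assumes s: "0 < s" "s \<le> t0"
  shows "- (1 / V s) \<le> (2 + 1/(M*t0)) / sqrt (sqrt s)"
proof -
  define r where "r = (\<lambda>s::real. sqrt (sqrt s))"
  define y where "y = (\<lambda>s. (2 - 1 / V s) * r s)"
  have r: "r x > 0" "r x ^ 4 = x" "r x \<le> 1" if "0 < x" "x \<le> 1" for x
  proof -
    have "r x ^ 4 = (r x ^ 2)^2" by simp
    then show "r x ^ 4 = x" unfolding r_def using that by simp
  qed (use that in \<open>auto simp: r_def\<close>)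
  have "y s \<le> y t0"
  proof (rule DERIV_nonneg_imp_nondecreasing[OF s(2)])
    fix x assume x: "s \<le> x" "x \<le> t0"
    then have x0: "0 < x" "x \<le> 1" using s t0 by auto
    define Z where "Z = 1 / V x"
    define Zd where "Zd = (1/2 + 2 * x * Z - x * (b - k * x) * Z^2) / ((2 - x) * x)"
    have dr: "(r has_real_derivative 1/(4 * r x ^ 3)) (at x)"
      unfolding r_def by (rule DERIV_sqrt_sqrt[OF x0(1)])
    have d: "(y has_real_derivative (- Zd) * r x + 1/(4 * r x ^ 3) * (2 - Z)) (at x)"
      unfolding y_def Zd_def Z_def
      by (rule derivative_eq_intros recip_V_has_derivative[OF x0(1) x(2)] dr refl)+ simp
    have "- ((1/2 + 2 * x * Z - x * (b - k * x) * Z^2)/(2-x)) + (2 - Z)/4 \<ge> 0"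
    proof (rule recip_weight_deriv_nonneg_arith[OF x0])
      show "Z < 0" unfolding Z_def using V_neg[OF x0(1) x(2)] by simp
      show "x * (-Z) * M \<le> 1" unfolding Z_def by (rule recip_V_barrier[OF x0(1) x(2)])
      show "\<bar>b - k * x\<bar> \<le> 4*B+3" using coeff_bound x0 by simp
      show "4*(4*B+3) \<le> M" "0 < M" using M M_pos by auto
    qed
    moreover have "x * Zd = (1/2 + 2 * x * Z - x * (b - k * x) * Z^2)/(2-x)"
      unfolding Zd_def using x0 by simp
    moreover have "(- Zd) * r x + 1/(4 * r x ^ 3) * (2 - Z) = (- (x * Zd) + (2 - Z)/4) / r x ^ 3"
    proof -
      have "x = r x ^ 4" using r(2)[OF x0] by simp
      then have "-(x * Zd) = -(r x ^ 4 * Zd)" by simp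
      then show ?thesis using r(1)[OF x0] by (simp add: field_simps eval_nat_numeral)
    qed
    ultimately show "\<exists>y'. (y has_real_derivative y') (at x) \<and> 0 \<le> y'"
      using d r(1)[OF x0] by (intro exI[of _ "(- Zd) * r x + 1/(4 * r x ^ 3) * (2 - Z)"]) simp
  qed
  also have "y t0 \<le> 2 + 1/(M*t0)"
  proof -
    have "- (1 / V t0) \<le> 1/(M*t0)" using recip_V_barrier[of t0] t0 M_pos by (simp add: field_simps)
    moreover have "1 / V t0 < 0" using V_neg[of t0] t0 by (simp add: divide_less_0_iff)
    then have "0 \<le> 2 - 1 / V t0" by linarith
    then have "(2 - 1 / V t0) * r t0 \<le> 2 - 1 / V t0"
      using mult_left_mono[OF r(3)[of t0]] t0 by simp
    ultimately show ?thesis unfolding y_def by linarith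
  qed
  finally have "(- (1 / V s)) * r s \<le> 2 + 1/(M*t0)"
    unfolding y_def using r[of s] s t0 by (smt (verit) mult_right_mono)
  then show ?thesis using r[of s] s t0 unfolding r_def by (simp add: pos_le_divide_eq)
qed

lemma log_correction_deriv_bound:
  assumes s: "0 < s" "s \<le> t0"
  defines "Ym \<equiv> 2 + 1/(M*t0)"
  shows "((\<lambda>s. 1 / V s - ln s / 4) has_real_derivative
      (1/4 + 2 * (1 / V s) - (b - k * s) * (1 / V s)^2) / (2 - s)) (at s)"
    and "\<bar>(1/4 + 2 * (1 / V s) - (b - k * s) * (1 / V s)^2) / (2 - s)\<bar>
      \<le> (1/4 + 2*Ym + (4*B+3)*Ym^2) / sqrt s"
proof -
  have "((\<lambda>s. 1 / V s - ln s / 4) has_real_derivative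
      (1/2 + 2 * s * (1 / V s) - s * (b - k * s) * (1 / V s)^2) / ((2 - s) * s) - inverse s / 4) (at s)"
    by (rule DERIV_diff[OF recip_V_has_derivative[OF s] DERIV_cdivide[OF DERIV_ln[OF s(1)]]])
  moreover have "(1/2 + 2 * s * (1 / V s) - s * (b - k * s) * (1 / V s)^2) / ((2 - s) * s) - inverse s / 4
      = (1/4 + 2 * (1 / V s) - (b - k * s) * (1 / V s)^2) / (2 - s)"
    using s t0 V_neg[OF s] by (simp add: field_simps)
  ultimately show "((\<lambda>s. 1 / V s - ln s / 4) has_real_derivative
      (1/4 + 2 * (1 / V s) - (b - k * s) * (1 / V s)^2) / (2 - s)) (at s)" by simp
  have "\<bar>(1/4 + 2 * (- (- (1 / V s))) - (b - k * s) * (- (- (1 / V s)))^2) / (2 - s)\<bar>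
      \<le> (1/4 + 2*Ym + (4*B+3)*Ym^2) / (sqrt (sqrt s))^2"
  proof (rule log_correction_deriv_arith)
    show "- (1 / V s) \<le> Ym / sqrt (sqrt s)" unfolding Ym_def by (rule recip_V_fourth_root_bound[OF s])
    show "0 \<le> - (1 / V s)" using V_neg[OF s] by (simp add: less_imp_le)
    show "\<bar>b - k * s\<bar> \<le> 4*B+3" using coeff_bound s t0 by simp
  qed (use s t0 in auto)
  then show "\<bar>(1/4 + 2 * (1 / V s) - (b - k * s) * (1 / V s)^2) / (2 - s)\<bar>
      \<le> (1/4 + 2*Ym + (4*B+3)*Ym^2) / sqrt s" using s by simp
qed

text \<open>The correction \<open>1/V(s) - (ln s)/4\<close> has an integrable derivative \<open>O(s\<^bsup>-1/2\<^esup>)\<close>,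
  hence stays bounded as \<open>s \<rightarrow> 0\<close>.\<close>

lemma log_correction_bound:
  assumes t: "0 < t" "t \<le> t0"
  shows "\<bar>1 / V t - ln t / 4\<bar> \<le> log_correction_const B M t0"
proof -
  define D where "D = 1/4 + 2*(2 + 1/(M*t0)) + (4*B+3)*(2 + 1/(M*t0))^2"
  have D: "D \<ge> 0" unfolding D_def using B M_pos t0 by (simp add: add_nonneg_nonneg)
  have "\<bar>(1 / V t0 - ln t0 / 4) - (1 / V t - ln t / 4)\<bar> \<le> 2 * D * sqrt t0 - 2 * D * sqrt t"
  proof (rule abs_diff_le_of_deriv_bound[OF t(2)])
    fix x assume x: "t \<le> x" "x \<le> t0"
    then have x0: "0 < x" "x \<le> t0" using t by auto
    show "((\<lambda>x. 2 * D * sqrt x) has_real_derivative D / sqrt x) (at x)"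
      using x0 by (auto intro!: derivative_eq_intros simp: field_simps)
    show "((\<lambda>s. 1 / V s - ln s / 4) has_real_derivative
        (1/4 + 2 * (1 / V x) - (b - k * x) * (1 / V x)^2) / (2 - x)) (at x)"
      by (rule log_correction_deriv_bound(1)[OF x0])
    show "\<bar>(1/4 + 2 * (1 / V x) - (b - k * x) * (1 / V x)^2) / (2 - x)\<bar> \<le> D / sqrt x"
      unfolding D_def by (rule log_correction_deriv_bound(2)[OF x0])
  qed
  moreover have "2 * D * sqrt t0 \<le> 2*D" "0 \<le> 2 * D * sqrt t" using D t t0 by (auto simp: mult_left_le)
  moreover have "\<bar>1 / V t0 - ln t0 / 4\<bar> \<le> 1/(M*t0) + \<bar>ln t0\<bar>/4"
  proof -
    have "- (1 / V t0) \<le> 1/(M*t0)" using recip_V_barrier[of t0] t0 M_pos by (simp add: field_simps)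
    moreover have "- (1 / V t0) \<ge> 0" using V_neg[of t0] t0 by (simp add: less_imp_le)
    ultimately show ?thesis by (simp add: abs_le_iff; linarith)
  qed
  ultimately show ?thesis unfolding log_correction_const_def D_def by (simp add: abs_le_iff; linarith)
qed

theorem log_asymptotics:
  assumes t: "0 < t" "t \<le> t0"
    and L: "ln (t/3) \<le> -(2*(2 + 4*log_correction_const B M t0) + 1)"
  shows "\<bar>V t - 4 / ln (t/3)\<bar> \<le> 8*(2 + 4*log_correction_const B M t0) / (ln (t/3))^2"
proof -
  have "0 \<le> ln (3::real)" "ln (3::real) \<le> 2" using ln_le_minus_one[of 3] by auto
  then have "\<bar>1 / (1 / V t) - 4 / ln (t/3)\<bar> \<le> 8*(2 + 4*log_correction_const B M t0) / (ln (t/3))^2"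
    using log_correction_bound[OF t] t L
    by (intro inverse_quarter_log_plus_bounded[where L="ln t" and G="1 / V t - ln t / 4"])
      (auto simp: ln_div)
  then show ?thesis by simp
qed

end

section \<open>Solutions above the barrier are maximal\<close>

lemma shifted_sol_diff_nonzero:
  assumes s1: "shifted_sol b k V" and s2: "shifted_sol b k V2"
    and x: "0 < x" "x \<le> T" and T: "T < 2" and neq: "V2 T \<noteq> V T"
  shows "V2 x \<noteq> V x"
proof -
  define c where "c = (\<lambda>s. ((V s + V2 s)/2 + 2 * s)/(s*(2-s)))"
  have "continuous_on {x..T} c" unfolding c_def using x T
    by (intro continuous_intros shifted_sol_continuous_on[OF s1] shifted_sol_continuous_on[OF s2]) auto
  then have "bounded (c ` {x..T})" by (intro compact_imp_bounded compact_continuous_image) auto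
  then obtain L where "\<forall>y\<in>c ` {x..T}. norm y \<le> L" unfolding bounded_iff by blast
  then have L: "\<And>s. s \<in> {x..T} \<Longrightarrow> \<bar>c s\<bar> \<le> L" by auto
  define W where "W = (\<lambda>y. V2 (y + x) - V (y + x))"
  have "W (T-x)^2 \<le> W 0^2 * exp (2*L * (T-x))"
  proof (rule gronwall_forward[where \<Phi>="\<lambda>y. W y^2" and K="2*L"])
    fix y assume y: "0 \<le> y" "y \<le> T-x"
    then have "0 < y + x" "y + x < 2" using x T by auto
    from shifted_sol_diff_deriv[OF s1 s2 this]
    have "((\<lambda>s. V2 s - V s) has_real_derivative - W y * c (y + x)) (at (y + x))"
      unfolding c_def W_def by simp
    then have "(W has_real_derivative - W y * c (y + x)) (at y)"
      unfolding W_def by (rule DERIV_shift[THEN iffD1])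
    from DERIV_power[OF this, of 2]
    show "((\<lambda>y. W y^2) has_real_derivative 2 * W y * (- W y * c (y + x))) (at y)"
      by (simp add: algebra_simps)
    have "- c (y + x) \<le> L" using L[of "y + x"] y by (simp add: abs_le_iff)
    then have "(- c (y + x)) * (2 * W y^2) \<le> L * (2 * W y^2)" by (rule mult_right_mono) simp
    moreover have "2 * W y * (- W y * c (y + x)) = (- c (y + x)) * (2 * W y^2)"
      by (simp add: power2_eq_square algebra_simps)
    ultimately show "2 * W y * (- W y * c (y + x)) \<le> 2*L * W y^2" by linarith
  next
    show "0 \<le> T - x" using x by simp
  qed
  moreover have "W (T-x)^2 > 0" unfolding W_def using neq by simp
  ultimately have "W 0 \<noteq> 0" by auto
  then show ?thesis unfolding W_def by simp
qed

lemma shifted_sol_order_backward: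
  assumes s1: "shifted_sol b k V" and s2: "shifted_sol b k V2"
    and a: "0 < a" "a \<le> T" and T: "T < 2" and lt: "V T < V2 T"
  shows "V a < V2 a"
proof (rule ccontr)
  assume "\<not> V a < V2 a"
  moreover have "continuous_on {a..T} (\<lambda>s. V2 s - V s)" using a T
    by (intro continuous_intros shifted_sol_continuous_on[OF s1] shifted_sol_continuous_on[OF s2]) auto
  ultimately obtain z where "a \<le> z" "z \<le> T" "V2 z - V z = 0"
    using IVT'[of "\<lambda>s. V2 s - V s" a 0 T] a lt by auto
  then show False using shifted_sol_diff_nonzero[OF s1 s2 _ _ T] a lt by force
qed

lemma shifted_sol_gap_lower_bound:
  assumes s1: "shifted_sol b k V" and s2: "shifted_sol b k V2" and M: "M > 0"
    and t1: "0 < t1" "t1 \<le> 1"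
    and low: "\<And>s. 0 < s \<Longrightarrow> s \<le> t1 \<Longrightarrow> -M * s \<le> V s"
    and gap: "\<And>s. 0 < s \<Longrightarrow> s \<le> t1 \<Longrightarrow> V s < V2 s"
    and s: "0 < s" "s \<le> t1"
  shows "(V2 t1 - V t1) * exp (-M * t1) \<le> V2 s - V s"
proof -
  define W where "W = (\<lambda>s. V2 s - V s)"
  have "W t1 * exp (-M * t1) \<le> W s * exp (-M * s)"
  proof (rule DERIV_nonpos_imp_nonincreasing[OF s(2)])
    fix x assume x: "s \<le> x" "x \<le> t1"
    then have x0: "0 < x" "x < 2" using s t1 by auto
    define Wd where "Wd = -(W x) * ((V x + V2 x)/2 + 2 * x) / (x * (2 - x))"
    have "(W has_real_derivative Wd) (at x)"
      using shifted_sol_diff_deriv[OF s1 s2 x0] unfolding W_def Wd_def by simp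
    then have d: "((\<lambda>x. W x * exp (-M * x)) has_real_derivative
        Wd * exp (-M * x) + W x * (exp (-M * x) * (-M))) (at x)"
      by (auto intro!: derivative_eq_intros)
    have Wx: "W x > 0" using gap[of x] x0 x unfolding W_def by simp
    have "-(W x) * ((V x + V2 x)/2 + 2 * x) \<le> W x * (M * x)"
    proof -
      have "(V x + V2 x)/2 = V x + W x / 2" unfolding W_def by (simp add: field_simps)
      then have "(V x + V2 x)/2 + 2 * x \<ge> -M * x" using low[OF x0(1) x(2)] Wx x0 by linarith
      then have "W x * (-M * x) \<le> W x * ((V x + V2 x)/2 + 2 * x)" using Wx by (intro mult_left_mono) auto
      moreover have "W x * (-M * x) = -(W x * (M * x))" by simp
      moreover have "-(W x) * ((V x + V2 x)/2 + 2 * x) = -(W x * ((V x + V2 x)/2 + 2 * x))" by simp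
      ultimately show ?thesis by linarith
    qed
    then have "Wd \<le> W x * (M * x) / (x * (2 - x))" unfolding Wd_def using x0
      by (intro divide_right_mono) auto
    also have "\<dots> = M * W x / (2 - x)" using x0 by (simp add: field_simps)
    also have "\<dots> \<le> M * W x"
      using mult_pos_pos[OF M Wx] x0 x t1 by (simp add: divide_le_eq mult_le_cancel_left1)
    finally have "Wd * exp (-M * x) + W x * (exp (-M * x) * (-M)) \<le> 0"
      by (simp add: algebra_simps mult_left_mono)
    then show "\<exists>y. ((\<lambda>x. W x * exp (-M * x)) has_real_derivative y) (at x) \<and> y \<le> 0" using d by blast
  qed
  also have "W s * exp (-M * s) \<le> W s"
    using gap[OF s] s M unfolding W_def by (simp add: mult_le_cancel_left1)
  finally show ?thesis unfolding W_def .
qed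

text \<open>Below a linear lower barrier the gap \<open>W = V\<^sub>2 - V\<close> between two solutions satisfies
  \<open>W' \<le> -W\<^sup>2/(8s)\<close> near \<open>0\<close>, so \<open>1/W - (ln s)/8\<close> increases; a gap bounded away from \<open>0\<close>
  would make \<open>1/W\<close> negative for small \<open>s\<close>.\<close>

lemma shifted_sol_gap_not_bounded_below:
  assumes s1: "shifted_sol b k V" and s2: "shifted_sol b k V2" and M: "M > 0"
    and t1: "0 < t1" "t1 \<le> 1"
    and low: "\<And>s. 0 < s \<Longrightarrow> s \<le> t1 \<Longrightarrow> -M * s \<le> V s"
    and w0: "0 < w0" and gap: "\<And>s. 0 < s \<Longrightarrow> s \<le> t1 \<Longrightarrow> w0 \<le> V2 s - V s"
  shows False
proof -
  define W where "W = (\<lambda>s. V2 s - V s)"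
  define t3 where "t3 = min t1 (w0/(4*M))"
  have t3: "0 < t3" "t3 \<le> t1" "M * t3 \<le> w0/4" unfolding t3_def using t1 w0 M
    by (auto simp: min_def field_simps)
  have Wpos: "W x > 0" if "0 < x" "x \<le> t3" for x using gap[of x] that t3 w0 unfolding W_def by simp
  define sx where "sx = t3 * exp (-(8/W t3) - 8)"
  have "0 \<le> 8 / W t3" using Wpos[of t3] t3 by (simp add: less_imp_le)
  then have "-(8/W t3) - 8 \<le> 0" by linarith
  then have "exp (-(8/W t3) - 8) \<le> 1" by simp
  then have sx: "0 < sx" "sx \<le> t3" unfolding sx_def using t3 by (auto intro: mult_left_le)
  have "inverse (W sx) - ln sx/8 \<le> inverse (W t3) - ln t3/8"
  proof (rule DERIV_nonneg_imp_nondecreasing[OF sx(2)])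
    fix x assume x: "sx \<le> x" "x \<le> t3"
    have x0: "0 < x" "x < 2" "x \<le> t1" using x sx t3 t1 by auto
    have Wx: "W x > 0" "w0 \<le> W x" using Wpos[of x] gap[of x] x0 x unfolding W_def by auto
    define Wd where "Wd = -(W x) * ((V x + V2 x)/2 + 2 * x) / (x * (2 - x))"
    have "(W has_real_derivative Wd) (at x)"
      using shifted_sol_diff_deriv[OF s1 s2 x0(1,2)] unfolding W_def Wd_def by simp
    from DERIV_diff[OF DERIV_inverse_fun[OF this] DERIV_cdivide[OF DERIV_ln[OF x0(1)], of 8]]
    have d: "((\<lambda>x. inverse (W x) - ln x/8) has_real_derivative
        -(Wd * inverse ((W x)^2)) - inverse x/8) (at x)"
      using Wx by (simp add: numeral_2_eq_2)
    have "(V x + V2 x)/2 + 2 * x \<ge> W x / 4"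
    proof -
      have "M * x \<le> w0/4" using t3 x M by (smt (verit) mult_left_mono)
      moreover have "(V x + V2 x)/2 = V x + W x / 2" unfolding W_def by (simp add: field_simps)
      moreover have "-M * x \<le> V x" using low[of x] x0 by simp
      ultimately show ?thesis using x0 Wx by linarith
    qed
    then have "W x * (W x / 4) \<le> W x * ((V x + V2 x)/2 + 2 * x)" using Wx by (intro mult_left_mono) auto
    moreover have "0 < x * (2 - x)" "x * (2 - x) \<le> 2 * x" using x0 by auto
    ultimately have "(W x * (W x / 4)) / (2 * x) \<le> (W x * ((V x + V2 x)/2 + 2 * x)) / (x * (2 - x))"
      using Wx by (intro frac_le) (auto intro: order_trans[OF _ \<open>W x * (W x / 4) \<le> _\<close>])
    then have "(W x)^2 / (8 * x) \<le> - Wd" unfolding Wd_def by (simp add: power2_eq_square)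
    then have "inverse x / 8 \<le> - Wd * inverse ((W x)^2)"
      using Wx x0 by (simp add: field_simps)
    then show "\<exists>y. ((\<lambda>x. inverse (W x) - ln x/8) has_real_derivative y) (at x) \<and> 0 \<le> y"
      using d by (intro exI[of _ "-(Wd * inverse ((W x)^2)) - inverse x/8"]) simp
  qed
  moreover have "ln sx/8 = ln t3/8 - inverse (W t3) - 1"
    unfolding sx_def using t3 Wpos[of t3] by (simp add: ln_mult field_simps)
  ultimately have "inverse (W sx) \<le> -1" by linarith
  moreover have "inverse (W sx) > 0" using Wpos[OF sx] by simp
  ultimately show False by linarith
qed

lemma shifted_sol_le_of_lower_barrier:
  assumes s1: "shifted_sol b k V" and s2: "shifted_sol b k V2" and M: "M > 0"
    and t1: "0 < t1" "t1 \<le> 1"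
    and low: "\<And>s. 0 < s \<Longrightarrow> s \<le> t1 \<Longrightarrow> -M * s \<le> V s"
    and T: "0 < T" "T < 2"
  shows "V2 T \<le> V T"
proof (rule ccontr)
  assume "\<not> V2 T \<le> V T"
  then have gap: "V s < V2 s" if "0 < s" "s \<le> T" for s
    using shifted_sol_order_backward[OF s1 s2 that T(2)] by simp
  define t2 where "t2 = min t1 T"
  have t2: "0 < t2" "t2 \<le> t1" "t2 \<le> T" "t2 \<le> 1" unfolding t2_def using t1 T by auto
  show False
  proof (rule shifted_sol_gap_not_bounded_below[OF s1 s2 M t2(1,4)])
    show "-M * s \<le> V s" if "0 < s" "s \<le> t2" for s using low that t2 by simp
    show "0 < (V2 t2 - V t2) * exp (-M * t2)" using gap t2 by simp
    show "(V2 t2 - V t2) * exp (-M * t2) \<le> V2 s - V s" if "0 < s" "s \<le> t2" for s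
      using that t2 low gap by (intro shifted_sol_gap_lower_bound[OF s1 s2 M t2(1,4)]) auto
  qed
qed

lemma is_max_sol_of_lower_barrier:
  assumes sol: "is_sol c U" and c: "c1 c = -1" and M: "M > 0" and t1: "0 < t1" "t1 \<le> 1"
    and low: "\<And>s. 0 < s \<Longrightarrow> s \<le> t1 \<Longrightarrow> -M * s \<le> U (s-1) - 2"
  shows "is_max_sol c U"
  unfolding is_max_sol_def
proof (intro conjI allI impI ballI)
  fix U2 and x :: real assume s2: "is_sol c U2" and x: "x \<in> {-1<..<1}"
  have "(\<lambda>t. U2 (t-1) - 2) (x+1) \<le> (\<lambda>t. U (t-1) - 2) (x+1)"
    using x by (intro shifted_sol_le_of_lower_barrier[OF shifted_sol_of_is_sol[OF sol c]
        shifted_sol_of_is_sol[OF s2 c] M t1 low]) auto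
  then show "U2 x \<le> U x" by simp
qed (rule sol)

lemma gamma_plus_eq_max_sol:
  assumes "is_max_sol c U"
  shows "gamma_plus c = U 0"
  unfolding gamma_plus_def
proof (rule the_equality)
  fix g assume "\<exists>U'. is_max_sol c U' \<and> U' 0 = g"
  then obtain U' where "is_max_sol c U'" "U' 0 = g" by blast
  then show "g = U 0" using assms unfolding is_max_sol_def by (metis order.antisym greaterThanLessThan_iff
        neg_less_0_iff_less zero_less_one)
qed (use assms in blast)

section \<open>Uniformity on compact parameter sets\<close>

lemma Pc_abs_bound:
  assumes "c1 c = -1" "\<bar>c2 c\<bar> \<le> B" "\<bar>c3 c\<bar> \<le> B" "x \<in> {-1<..<1}"
  shows "\<bar>Pc c x\<bar> \<le> 3*B+2"
proof -
  have x: "\<bar>1 + x\<bar> \<le> 2" "\<bar>1 - x^2\<bar> \<le> 1" using assms(4) by (auto simp: abs_square_le_1 abs_le_iff)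
  have "\<bar>c1 c * (1 - x)\<bar> \<le> 2" using assms(1,4) by simp
  moreover have "\<bar>c2 c * (1 + x)\<bar> \<le> B * 2" unfolding abs_mult using assms(2) x by (intro mult_mono) auto
  moreover have "\<bar>c3 c * (1 - x^2)\<bar> \<le> B * 1" unfolding abs_mult using assms(3) x by (intro mult_mono) auto
  ultimately show ?thesis
    unfolding Pc_def using abs_triangle_ineq[of "c1 c * (1 - x) + c2 c * (1 + x)" "c3 c * (1 - x^2)"]
      abs_triangle_ineq[of "c1 c * (1 - x)" "c2 c * (1 + x)"] by linarith
qed

lemma Pc_diff_bound:
  assumes "c1 c = c1 c'" "x \<in> {-1<..<1}"
  shows "\<bar>Pc c x - Pc c' x\<bar> \<le> 2*\<bar>c2 c - c2 c'\<bar> + \<bar>c3 c - c3 c'\<bar>"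
proof -
  have x: "\<bar>1 + x\<bar> \<le> 2" "\<bar>1 - x^2\<bar> \<le> 1" using assms(2) by (auto simp: abs_square_le_1 abs_le_iff)
  have eq: "Pc c x - Pc c' x = (c2 c - c2 c') * (1 + x) + (c3 c - c3 c') * (1 - x^2)"
    unfolding Pc_def using assms(1) by (simp add: algebra_simps)
  have "\<bar>(c2 c - c2 c') * (1 + x)\<bar> \<le> \<bar>c2 c - c2 c'\<bar> * 2"
    unfolding abs_mult using x by (intro mult_left_mono) auto
  moreover have "\<bar>(c3 c - c3 c') * (1 - x^2)\<bar> \<le> \<bar>c3 c - c3 c'\<bar> * 1"
    unfolding abs_mult using x by (intro mult_left_mono) auto
  ultimately show ?thesis
    unfolding eq using abs_triangle_ineq[of "(c2 c - c2 c') * (1 + x)" "(c3 c - c3 c') * (1 - x^2)"]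
    by linarith
qed

lemma compact_param_bound:
  fixes K :: "(param \<times> real) set"
  assumes "compact K"
  obtains B where "0 \<le> B" "\<And>c g. (c, g) \<in> K \<Longrightarrow> \<bar>c2 c\<bar> \<le> B \<and> \<bar>c3 c\<bar> \<le> B"
proof -
  obtain B0 where B0: "\<And>p. p \<in> K \<Longrightarrow> norm p \<le> B0"
    using compact_imp_bounded[OF assms] unfolding bounded_iff by blast
  have "\<bar>c2 c\<bar> \<le> max B0 0 \<and> \<bar>c3 c\<bar> \<le> max B0 0" if "(c, g) \<in> K" for c g
  proof -
    obtain a u v where c: "c = (a, u, v)" by (cases c) auto
    have "norm (u, v) \<le> norm (a, u, v)" "norm (a, u, v) \<le> norm ((a, u, v), g)"
      by (rule norm_snd_le norm_fst_le)+
    then show ?thesis using B0[OF that] norm_fst_le[of u v] norm_snd_le[of v u]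
      unfolding c c2_def c3_def by auto
  qed
  then show ?thesis using that[of "max B0 0"] by auto
qed

lemma is_sol_subseq_limit:
  fixes p :: "nat \<Rightarrow> param \<times> real" and Us :: "nat \<Rightarrow> real \<Rightarrow> real"
  assumes K: "compact K" and pK: "\<And>n. p n \<in> K"
    and c1p: "\<And>n. c1 (fst (p n)) = -1"
    and B: "0 \<le> B" "\<And>n. \<bar>c2 (fst (p n))\<bar> \<le> B \<and> \<bar>c3 (fst (p n))\<bar> \<le> B"
    and sols: "\<And>n. is_sol (fst (p n)) (Us n)" and U0: "\<And>n. Us n 0 = snd (p n)"
  obtains r c g U where "strict_mono r" "(c, g) \<in> K" "c1 c = -1" "is_sol c U" "U 0 = g"
    "\<And>x. x \<in> {-1<..<1} \<Longrightarrow> (\<lambda>n. Us (r n) x) \<longlonglongrightarrow> U x"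
proof -
  obtain l r where l: "l \<in> K" and r: "strict_mono r" and lim: "(p \<circ> r) \<longlonglongrightarrow> l"
    using seq_compactE[OF compact_imp_seq_compact[OF K], of p] pK by blast
  obtain c g where lcg: "l = (c, g)" by (cases l)
  have cl: "(\<lambda>n. fst (p (r n))) \<longlonglongrightarrow> c" and gl: "(\<lambda>n. snd (p (r n))) \<longlonglongrightarrow> g"
    using tendsto_fst[OF lim] tendsto_snd[OF lim] unfolding lcg by (simp_all add: comp_def)
  have "(\<lambda>n. c1 (fst (p (r n)))) \<longlonglongrightarrow> c1 c" unfolding c1_def by (intro tendsto_intros cl)
  then have c1c: "c1 c = -1" unfolding c1p by (simp add: LIMSEQ_const_iff)
  define e where "e = (\<lambda>n. 2*\<bar>c2 (fst (p (r n))) - c2 c\<bar> + \<bar>c3 (fst (p (r n))) - c3 c\<bar>)"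
  have "e \<longlonglongrightarrow> 2*\<bar>c2 c - c2 c\<bar> + \<bar>c3 c - c3 c\<bar>"
    unfolding e_def c2_def c3_def by (intro tendsto_intros cl)
  then have e0: "e \<longlonglongrightarrow> 0" by simp
  have "\<exists>U. riccati_sol (Pc c) U \<and> U 0 = g \<and> (\<forall>x\<in>{-1<..<1}. (\<lambda>n. Us (r n) x) \<longlonglongrightarrow> U x)"
  proof (rule riccati_sol_limit[where Ps="\<lambda>n. Pc (fst (p (r n)))" and Q="3*B+2" and e=e])
    show "riccati_sol (Pc (fst (p (r n)))) (Us (r n))" for n using sols is_sol_iff_riccati_sol by blast
    show "\<bar>Pc (fst (p (r n))) x\<bar> \<le> 3*B+2" if "x \<in> {-1<..<1}" for n x
      using B(2)[of "r n"] Pc_abs_bound[OF c1p _ _ that] by simp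
    show "\<bar>Pc (fst (p (r n))) x - Pc c x\<bar> \<le> e n" if "x \<in> {-1<..<1}" for n x
      unfolding e_def using Pc_diff_bound[OF _ that] c1p c1c by simp
    show "(\<lambda>n. Us (r n) 0) \<longlonglongrightarrow> g" using gl U0 by simp
  qed (use B e0 in auto)
  then obtain U where "riccati_sol (Pc c) U" "U 0 = g" "\<And>x. x \<in> {-1<..<1} \<Longrightarrow> (\<lambda>n. Us (r n) x) \<longlonglongrightarrow> U x"
    by blast
  then show ?thesis using that[OF r l[unfolded lcg] c1c] is_sol_iff_riccati_sol by blast
qed

text \<open>If the entry time could not be chosen uniformly on \<open>K\<close>, a limit of offending solutions would
  stay above the barrier \<open>-Mt\<close>; by the comparison principle it would then be the maximal solution,
  contradicting \<open>\<gamma> < \<gamma>\<^sup>+(c)\<close>.\<close>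

lemma uniform_barrier_entry:
  fixes K :: "(param \<times> real) set"
  assumes K: "compact K" "K \<subseteq> {(c, g). c1 c = -1 \<and> g < gamma_plus c}"
    and B: "0 \<le> B" "\<And>c g. (c, g) \<in> K \<Longrightarrow> \<bar>c2 c\<bar> \<le> B \<and> \<bar>c3 c\<bar> \<le> B"
    and M: "M = 16*B+16" and tmax: "0 < tmax" "tmax * (M^2+M+B+1) \<le> 1"
  shows "\<exists>ts. 0 < ts \<and> ts \<le> tmax \<and> (\<forall>(c, g)\<in>K. \<forall>U. is_sol c U \<and> U 0 = g \<longrightarrow> U (ts - 1) - 2 < -M * ts)"
proof (rule ccontr)
  assume neg: "\<not> ?thesis"
  have M0: "M > 0" using M B by simp
  have den: "M^2+M+B+1 \<ge> 1" using M0 B by (simp add: add_nonneg_nonneg)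
  then have "tmax * 1 \<le> tmax * (M^2+M+B+1)" using tmax by (intro mult_left_mono) auto
  then have tmax_pos: "0 < tmax" "tmax \<le> 1" using tmax by linarith+
  define \<tau> where "\<tau> = (\<lambda>n::nat. tmax / (real n + 2))"
  have \<tau>: "0 < \<tau> n" "\<tau> n \<le> tmax" for n unfolding \<tau>_def using tmax_pos by (auto simp: divide_le_eq)
  have "\<forall>n. \<exists>q. fst q \<in> K \<and> is_sol (fst (fst q)) (snd q) \<and> snd q 0 = snd (fst q)
      \<and> \<not> snd q (\<tau> n - 1) - 2 < -M * \<tau> n"
  proof
    fix n
    from neg \<tau>[of n] obtain c g U where "(c, g) \<in> K" "is_sol c U" "U 0 = g" "\<not> U (\<tau> n - 1) - 2 < -M * \<tau> n"
      by blast
    then show "\<exists>q. fst q \<in> K \<and> is_sol (fst (fst q)) (snd q) \<and> snd q 0 = snd (fst q)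
        \<and> \<not> snd q (\<tau> n - 1) - 2 < -M * \<tau> n"
      by (intro exI[of _ "((c, g), U)"]) auto
  qed
  then obtain q where q: "\<And>n. fst (q n) \<in> K" "\<And>n. is_sol (fst (fst (q n))) (snd (q n))"
    "\<And>n. snd (q n) 0 = snd (fst (q n))" "\<And>n. \<not> snd (q n) (\<tau> n - 1) - 2 < -M * \<tau> n"
    by metis
  have c1q: "c1 (fst (fst (q n))) = -1" for n using q(1)[of n] K(2) by (cases "fst (q n)") auto
  have Bq: "\<bar>c2 (fst (fst (q n)))\<bar> \<le> B \<and> \<bar>c3 (fst (fst (q n)))\<bar> \<le> B" for n
    using B(2)[of "fst (fst (q n))" "snd (fst (q n))"] q(1)[of n] by simp
  have low: "-M * t \<le> snd (q n) (t-1) - 2" if t: "\<tau> n \<le> t" "t \<le> tmax" for n t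
  proof (rule shifted_sol_above_barrier[where V="\<lambda>t. snd (q n) (t-1) - 2",
        OF shifted_sol_of_is_sol[OF q(2) c1q] B(1) _ _ M _ \<tau>(1)[of n] t(1)])
    show "t * (M^2+M+B+1) \<le> 1" using mult_right_mono[of t tmax "M^2+M+B+1"] t tmax den by linarith
    show "-M * \<tau> n \<le> snd (q n) (\<tau> n - 1) - 2" using q(4)[of n] by simp
  qed (use Bq[of n] in \<open>auto simp: abs_le_iff\<close>)
  obtain r c g U where r: "strict_mono r" and cg: "(c, g) \<in> K" "c1 c = -1" and U: "is_sol c U" "U 0 = g"
    and conv: "\<And>x. x \<in> {-1<..<1} \<Longrightarrow> (\<lambda>n. snd (q (r n)) x) \<longlonglongrightarrow> U x"
    using is_sol_subseq_limit[where p="\<lambda>n. fst (q n)" and Us="\<lambda>n. snd (q n)", OF K(1) q(1) c1q B(1) Bq q(2,3)]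
    by blast
  have "-M * t \<le> U (t-1) - 2" if t: "0 < t" "t \<le> tmax" for t
  proof (rule LIMSEQ_le_const)
    show "(\<lambda>n. snd (q (r n)) (t-1) - 2) \<longlonglongrightarrow> U (t-1) - 2" using t tmax_pos by (intro tendsto_intros conv) auto
    obtain N :: nat where N: "real N \<ge> tmax/t" using real_arch_simple by blast
    have "\<tau> (r n) \<le> t" if "n \<ge> N" for n
    proof -
      have "real (r n) + 2 \<ge> tmax/t" using seq_suble[OF r, of n] N that by linarith
      then show ?thesis using t unfolding \<tau>_def by (simp add: divide_le_eq mult.commute)
    qed
    then show "\<exists>N. \<forall>n\<ge>N. -M * t \<le> snd (q (r n)) (t-1) - 2" using low t by blast
  qed
  then have "gamma_plus c = g"
    using gamma_plus_eq_max_sol[OF is_max_sol_of_lower_barrier[OF U(1) cg(2) M0 tmax_pos]] U(2) by simp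
  then show False using cg(1) K(2) by auto
qed

lemma is_sol_log_asymptotics:
  assumes U: "is_sol c U" and c: "c1 c = -1" "\<bar>c2 c\<bar> \<le> B" "\<bar>c3 c\<bar> \<le> B"
    and M: "M = 16*B+16" and ts: "0 < ts" "ts * (M^2+M+B+1) \<le> 1" and entry: "U (ts - 1) - 2 < -M * ts"
    and x: "-1 < x" "1 + x \<le> ts"
    and small: "ln ((1 + x) / 3) \<le> -(2*(2 + 4*log_correction_const B M ts) + 1)"
  shows "\<bar>U x - 2 - 4 / ln ((1 + x) / 3)\<bar> \<le> 8*(2 + 4*log_correction_const B M ts) / (ln ((1 + x) / 3))^2"
proof -
  have B: "0 \<le> B" using c by linarith
  have sol: "shifted_sol (c2 c + 2 * c3 c - 3) (c3 c) (\<lambda>t. U (t-1) - 2)"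
    by (rule shifted_sol_of_is_sol[OF U c(1)])
  have coeff: "\<bar>c2 c + 2 * c3 c - 3\<bar> \<le> 3*B+3" "\<bar>c3 c\<bar> \<le> B" using c by (auto simp: abs_le_iff)
  have "ts \<le> ts * (M^2+M+B+1)" using ts B M by (simp add: mult_le_cancel_left1 add_nonneg_nonneg)
  then have "ts \<le> 1" using ts by linarith
  moreover note shifted_sol_below_barrier[OF sol B coeff M ts entry]
  ultimately interpret trapped_shifted_sol "c2 c + 2 * c3 c - 3" "c3 c" B M ts "\<lambda>t. U (t-1) - 2"
    using sol B coeff M ts(1) by unfold_locales auto
  show ?thesis using log_asymptotics[of "1 + x"] x small by (simp add: add.commute)
qed

lemma uniform_log_asymptotics:
  fixes K :: "(param \<times> real) set"
  assumes K: "compact K" "K \<subseteq> {(c, g). c1 c = -1 \<and> g < gamma_plus c}"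
  shows "\<exists>\<delta>>0. \<exists>C\<ge>0. \<forall>(c, g)\<in>K. \<forall>U. is_sol c U \<and> U 0 = g \<longrightarrow> (\<forall>x. -1 < x \<and> x < -1 + \<delta> \<longrightarrow>
           1 \<le> \<bar>ln ((1 + x) / 3)\<bar> \<and> \<bar>U x - 2 - 4 / ln ((1 + x) / 3)\<bar> \<le> C / (ln ((1 + x) / 3))^2)"
proof -
  obtain B where B: "0 \<le> B" "\<And>c g. (c, g) \<in> K \<Longrightarrow> \<bar>c2 c\<bar> \<le> B \<and> \<bar>c3 c\<bar> \<le> B"
    using compact_param_bound[OF K(1)] by blast
  define M where "M = 16*B+16"
  have den: "M^2+M+B+1 \<ge> 1" using B unfolding M_def by (simp add: add_nonneg_nonneg)
  have "\<exists>ts. 0 < ts \<and> ts \<le> 1/(M^2+M+B+1) \<and>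
      (\<forall>(c, g)\<in>K. \<forall>U. is_sol c U \<and> U 0 = g \<longrightarrow> U (ts - 1) - 2 < -M * ts)"
  proof (rule uniform_barrier_entry[OF K B(1) _ M_def])
    show "\<bar>c2 c\<bar> \<le> B \<and> \<bar>c3 c\<bar> \<le> B" if "(c, g) \<in> K" for c g using B(2)[OF that] .
    show "0 < 1/(M^2+M+B+1)" "1/(M^2+M+B+1) * (M^2+M+B+1) \<le> 1" using den by auto
  qed
  then obtain ts where ts: "0 < ts" "ts * (M^2+M+B+1) \<le> 1"
    and entry: "\<forall>(c, g)\<in>K. \<forall>U. is_sol c U \<and> U 0 = g \<longrightarrow> U (ts - 1) - 2 < -M * ts"
    using den by (auto simp: pos_le_divide_eq)
  define L where "L = log_correction_const B M ts"
  have L: "L \<ge> 0" unfolding L_def log_correction_const_def M_def using ts B by simp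
  define \<delta> where "\<delta> = min ts (3 * exp (-(2*(2 + 4*L) + 1)))"
  have "1 \<le> \<bar>ln ((1 + x) / 3)\<bar> \<and> \<bar>U x - 2 - 4 / ln ((1 + x) / 3)\<bar> \<le> 8*(2 + 4*L) / (ln ((1 + x) / 3))^2"
    if cg: "(c, g) \<in> K" and U: "is_sol c U" "U 0 = g" and x: "-1 < x" "x < -1 + \<delta>" for c g U x
  proof -
    have "(1 + x)/3 < exp (-(2*(2 + 4*L) + 1))" using x unfolding \<delta>_def by auto
    then have "ln ((1 + x) / 3) < -(2*(2 + 4*L) + 1)"
      using x by (metis add.commute diff_gt_0_iff_gt divide_pos_pos exp_gt_zero ln_exp ln_less_cancel_iff
          minus_diff_eq zero_less_numeral diff_minus_eq_add)
    moreover from this have "\<bar>U x - 2 - 4 / ln ((1 + x) / 3)\<bar> \<le> 8*(2 + 4*L) / (ln ((1 + x) / 3))^2"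
      using cg U x entry B(2)[OF cg] K(2) unfolding L_def \<delta>_def
      by (intro is_sol_log_asymptotics[OF U(1) _ _ _ M_def ts]) auto
    ultimately show ?thesis using L by auto
  qed
  moreover have "\<delta> > 0" unfolding \<delta>_def using ts by simp
  moreover have "8*(2 + 4*L) \<ge> 0" using L by simp
  ultimately show ?thesis by blast
qed

lemma abs_le_powr_of_inverse_square:
  fixes l C a \<epsilon> :: real
  assumes "1 \<le> \<bar>l\<bar>" "0 < \<epsilon>" "0 \<le> C" "\<bar>a\<bar> \<le> C / l^2"
  shows "\<bar>a\<bar> < (C + 1) * \<bar>l\<bar> powr (-2 + \<epsilon>)"
proof -
  have l: "\<bar>l\<bar> > 0" using assms(1) by linarith
  have "\<bar>l\<bar> powr (-2) = 1/l^2" using l by (simp add: powr_minus powr_numeral divide_inverse)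
  then have "C / l^2 < (C + 1) * \<bar>l\<bar> powr (-2)" using l by (simp add: divide_strict_right_mono)
  also have "\<dots> \<le> (C + 1) * \<bar>l\<bar> powr (-2 + \<epsilon>)"
    using assms by (intro mult_left_mono powr_mono) auto
  finally show ?thesis using assms(4) by linarith
qed

text \<open>The error is in fact \<open>O(|ln((1 + x)/3)|\<^bsup>-2\<^esup>)\<close> uniformly on \<open>K\<close>.\<close>

theorem lemma2p14:
  fixes K :: "(param \<times> real) set"
  assumes "compact K"
    and "K \<subseteq> Iset \<inter> {(c, g). c1 c = -1 \<and> g < gamma_plus c}"
  shows "\<forall>\<epsilon>>0. \<exists>\<delta>>0. \<exists>C>0. \<forall>(c, g)\<in>K. \<forall>U. is_sol c U \<and> U 0 = g \<longrightarrow>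
           (\<forall>x. -1 < x \<and> x < -1 + \<delta> \<and> x < 1 \<longrightarrow>
              \<bar>U x - 2 - 4 / ln ((1 + x) / 3)\<bar> < C * \<bar>ln ((1 + x) / 3)\<bar> powr (-2 + \<epsilon>))"
proof (intro allI impI)
  fix \<epsilon> :: real assume \<epsilon>: "\<epsilon> > 0"
  have "K \<subseteq> {(c, g). c1 c = -1 \<and> g < gamma_plus c}" using assms(2) by auto
  then obtain \<delta> C where "\<delta> > 0" "C \<ge> 0" and asym: "\<forall>(c, g)\<in>K. \<forall>U. is_sol c U \<and> U 0 = g \<longrightarrow>
      (\<forall>x. -1 < x \<and> x < -1 + \<delta> \<longrightarrow>
        1 \<le> \<bar>ln ((1 + x) / 3)\<bar> \<and> \<bar>U x - 2 - 4 / ln ((1 + x) / 3)\<bar> \<le> C / (ln ((1 + x) / 3))^2)"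
    using uniform_log_asymptotics[OF assms(1)] by blast
  have "\<bar>U x - 2 - 4 / ln ((1 + x) / 3)\<bar> < (C + 1) * \<bar>ln ((1 + x) / 3)\<bar> powr (-2 + \<epsilon>)"
    if "(c, g) \<in> K" "is_sol c U" "U 0 = g" "-1 < x" "x < -1 + \<delta>" for c g U x
    using asym that abs_le_powr_of_inverse_square[OF _ \<epsilon> \<open>C \<ge> 0\<close>] by blast
  then have "\<forall>(c, g)\<in>K. \<forall>U. is_sol c U \<and> U 0 = g \<longrightarrow> (\<forall>x. -1 < x \<and> x < -1 + \<delta> \<and> x < 1 \<longrightarrow>
      \<bar>U x - 2 - 4 / ln ((1 + x) / 3)\<bar> < (C + 1) * \<bar>ln ((1 + x) / 3)\<bar> powr (-2 + \<epsilon>))"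
    by blast
  moreover have "C + 1 > 0" using \<open>C \<ge> 0\<close> by simp
  ultimately show "\<exists>\<delta>>0. \<exists>C>0. \<forall>(c, g)\<in>K. \<forall>U. is_sol c U \<and> U 0 = g \<longrightarrow>
      (\<forall>x. -1 < x \<and> x < -1 + \<delta> \<and> x < 1 \<longrightarrow>
        \<bar>U x - 2 - 4 / ln ((1 + x) / 3)\<bar> < C * \<bar>ln ((1 + x) / 3)\<bar> powr (-2 + \<epsilon>))"
    using \<open>\<delta> > 0\<close> by blast
qed

end
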